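(* Let $s>0$ and $0<\epsilon<\min\{s,1\}$, and let $\rho,\lambda\in(1,\infty)$, $\sigma\in(1/2,1)$ be chosen such that $1-\sigma=\frac{1}{\rho}+\frac{1}{\lambda}$, $\rho(2\sigma-1-\epsilon)>1$ and $\lambda\le 2/(1-s)^+$. Define, for any $r$, the norm $\|u\|_{\mathcal{H}^r}:=\|u\|_{H^r}+\|\hat{u}\|_{L^\lambda(-1,1)}$. For the Korteweg–de Vries equation $u_t+u_{xxx}\pm(u^2)_x=0$ on $\mathbb{R}$, with phase $\Phi(\xi,\xi_1,\xi_2)=3\xi\xi_1\xi_2$ and symbol $m=\xi$, consider the bilinear operator $$\mathcal{F}[T_\sigma(u_1,u_2)](\xi)=\int_{\xi_1+\xi_2=\xi}\frac{\xi}{\langle\Phi\rangle^{\sigma}}\hat{u}_1(\xi_1)\hat{u}_2(\xi_2)\,d\xi_1,$$ where $\langle\Phi\rangle=(1+\Phi^2)^{1/2}$. Then for any $u_1,u_2\in\mathcal{H}^s$, $$\|T_\sigma(u_1,u_2)\|_{\mathcal{H}^{s+\epsilon}}\lesssim \|u_1\|_{\mathcal{H}^s}\|u_2\|_{\mathcal{H}^s}.$$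
   Context: This is used to prove nonlinear smoothing for KdV on $H^s(\mathbb{R})\cap L^2(|x|^{s/2}dx)$ of any order $\epsilon<\min\{s,1\}$, $s>0$. The auxiliary norm $\mathcal{H}^s$ (with the $L^\lambda(-1,1)$ control of the Fourier transform at low frequencies) is introduced because the plain $H^s$ norm is not enough; for data in $H^s\cap L^2(|x|^{s/2}dx)$ the profile's Fourier transform lies in $H^{s/2}\hookrightarrow L^\lambda$. *)

theory Defs
  imports "HOL-Analysis.Analysis"
begin

(* Functions are represented on the Fourier side: f = \<hat>u :: real \<Rightarrow> complex. *)

definition japan :: "real \<Rightarrow> real" where
  "japan x = sqrt (1 + x\<^sup>2)"

definition sob_int :: "real \<Rightarrow> (real \<Rightarrow> complex) \<Rightarrow> ennreal" where
  "sob_int r f = (\<integral>\<^sup>+ \<xi>. ennreal (japan \<xi> powr (2 * r) * (cmod (f \<xi>))\<^sup>2) \<partial>lborel)"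

definition loc_int :: "real \<Rightarrow> (real \<Rightarrow> complex) \<Rightarrow> ennreal" where
  "loc_int lam f = (\<integral>\<^sup>+ \<xi>\<in>{-1<..<1}. ennreal (cmod (f \<xi>) powr lam) \<partial>lborel)"

definition in_Hcal :: "real \<Rightarrow> real \<Rightarrow> (real \<Rightarrow> complex) \<Rightarrow> bool" where
  "in_Hcal lam r f \<longleftrightarrow> f \<in> borel_measurable lborel \<and> sob_int r f < \<infinity> \<and> loc_int lam f < \<infinity>"

definition Hcal_norm :: "real \<Rightarrow> real \<Rightarrow> (real \<Rightarrow> complex) \<Rightarrow> real" where
  "Hcal_norm lam r f = sqrt (enn2real (sob_int r f)) + (enn2real (loc_int lam f)) powr (1 / lam)"

definition kdv_phase :: "real \<Rightarrow> real \<Rightarrow> real \<Rightarrow> real" where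
  "kdv_phase \<xi> \<xi>1 \<xi>2 = 3 * \<xi> * \<xi>1 * \<xi>2"

(* Fourier transform of T_\<sigma>(u1,u2), in terms of f1 = \<hat>u1, f2 = \<hat>u2 *)
definition T_sigma :: "real \<Rightarrow> (real \<Rightarrow> complex) \<Rightarrow> (real \<Rightarrow> complex) \<Rightarrow> real \<Rightarrow> complex" where
  "T_sigma \<sigma> f1 f2 \<xi> = (\<integral> \<xi>1. complex_of_real (\<xi> / japan (kdv_phase \<xi> \<xi>1 (\<xi> - \<xi>1)) powr \<sigma>)
        * f1 \<xi>1 * f2 (\<xi> - \<xi>1) \<partial>lborel)"

end

theory Submission
  imports Defs
begin

text \<open>
  Split the output frequency at \<open>\<bar>\<xi>\<bar> = 2\<close>. For \<open>\<bar>\<xi>\<bar> < 2\<close> the multiplier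
  \<open>\<bar>\<xi>\<bar> / japan \<Phi> powr \<sigma>\<close> is at most \<open>\<bar>\<xi>\<bar>\<close>, so Cauchy-Schwarz bounds \<open>T_sigma \<sigma> f1 f2 \<xi>\<close>
  by \<open>\<bar>\<xi>\<bar> \<parallel>f1\<parallel>\<^sub>2 \<parallel>f2\<parallel>\<^sub>2\<close>; this also controls the \<open>L\<^sup>\<lambda>(-1,1)\<close> part of the norm.
  For \<open>\<bar>\<xi>\<bar> \<ge> 2\<close> the resonance \<open>\<bar>\<Phi>\<bar> = 3 \<bar>\<xi>\<bar> \<bar>\<eta>\<bar> \<bar>\<xi> - \<eta>\<bar> \<ge> \<xi>\<^sup>2 min \<bar>\<eta>\<bar> \<bar>\<xi> - \<eta>\<bar>\<close>
  absorbs the derivative and the gain \<open>japan \<xi> powr \<epsilon>\<close> because \<open>1 + \<epsilon> \<le> 2 \<sigma>\<close>. What is left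
  is \<open>\<bar>\<eta>\<bar> powr - \<sigma> * japan (\<xi> - \<eta>) powr s\<close> when \<open>\<bar>\<eta>\<bar> < 1\<close>, the symmetric term when
  \<open>\<bar>\<xi> - \<eta>\<bar> < 1\<close>, and \<open>min \<bar>\<eta>\<bar> \<bar>\<xi> - \<eta>\<bar> powr - (\<sigma> + s)\<close> times the weights
  \<open>japan \<eta> powr s * japan (\<xi> - \<eta>) powr s\<close> otherwise. The singular weight \<open>\<bar>\<eta>\<bar> powr - \<sigma>\<close>
  on \<open>(-1,1)\<close> lies in \<open>L\<^sup>q\<close> for the exponent \<open>q\<close> dual to \<open>\<lambda>\<close>, because \<open>\<sigma> < 1 - 1/\<lambda>\<close>;
  by Hoelder's inequality it turns the \<open>L\<^sup>\<lambda>(-1,1)\<close> part of the norm into an \<open>L\<^sup>1\<close> bound, and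
  Young's inequality \<open>L\<^sup>1 * L\<^sup>2 \<subseteq> L\<^sup>2\<close> handles these two terms. The weight
  \<open>\<bar>\<eta>\<bar> powr - (\<sigma> + s)\<close> on \<open>\<bar>\<eta>\<bar> \<ge> 1\<close> is square integrable since \<open>\<sigma> + s > 1/2\<close>, so
  Cauchy-Schwarz in \<open>\<eta>\<close> handles the last term.
\<close>

section \<open>Integral inequalities on the real line\<close>

lemma ennreal_power2_add_le: "((a::ennreal) + b)\<^sup>2 \<le> 2 * (a\<^sup>2 + b\<^sup>2)"
proof (cases "a = top \<or> b = top")
  case True
  then have "2 * (a\<^sup>2 + b\<^sup>2) = top"
    by (auto simp: power2_eq_square)
  then show ?thesis
    by (simp only: top_greatest)
next
  case False
  then obtain x y where xy: "a = ennreal x" "b = ennreal y" "0 \<le> x" "0 \<le> y"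
    by (cases a; cases b) auto
  have "(x + y)\<^sup>2 \<le> 2 * (x\<^sup>2 + y\<^sup>2)"
    using sum_squares_ge_zero[of "x - y" 0] by (simp add: power2_eq_square algebra_simps)
  then have "ennreal ((x + y)\<^sup>2) \<le> ennreal (2 * (x\<^sup>2 + y\<^sup>2))"
    by (rule ennreal_leI)
  moreover have "(a + b)\<^sup>2 = ennreal ((x + y)\<^sup>2)"
    using xy by (simp add: ennreal_power flip: ennreal_plus)
  moreover have "2 * (a\<^sup>2 + b\<^sup>2) = ennreal (2 * (x\<^sup>2 + y\<^sup>2))"
    using xy by (simp add: ennreal_power ennreal_mult)
  ultimately show ?thesis
    by simp
qed

lemma ennreal_power2_add3_le: "((a::ennreal) + b + c)\<^sup>2 \<le> 4 * (a\<^sup>2 + b\<^sup>2 + c\<^sup>2)"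
proof -
  have "(a + b + c)\<^sup>2 \<le> 2 * ((a + b)\<^sup>2 + c\<^sup>2)"
    by (rule ennreal_power2_add_le)
  also have "\<dots> \<le> 2 * (2 * (a\<^sup>2 + b\<^sup>2) + 2 * c\<^sup>2)"
    by (intro mult_left_mono add_mono ennreal_power2_add_le) (simp_all add: mult_2 add_increasing)
  finally show ?thesis
    by (simp add: algebra_simps)
qed

lemma ennreal_le_mult:
  "x \<le> ennreal a \<Longrightarrow> y \<le> ennreal b \<Longrightarrow> 0 \<le> a \<Longrightarrow> 0 \<le> b \<Longrightarrow> x * y \<le> ennreal (a * b)"
  by (simp add: ennreal_mult mult_mono)

lemma ennreal_le_add:
  "x \<le> ennreal a \<Longrightarrow> y \<le> ennreal b \<Longrightarrow> 0 \<le> a \<Longrightarrow> 0 \<le> b \<Longrightarrow> x + y \<le> ennreal (a + b)"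
  by (simp add: add_mono)

lemma ennreal_le_power2: "x \<le> ennreal a \<Longrightarrow> 0 \<le> a \<Longrightarrow> x\<^sup>2 \<le> ennreal (a\<^sup>2)"
  by (simp add: power2_eq_square ennreal_le_mult)

lemma nn_integral_lborel_reflect:
  fixes b :: "real \<Rightarrow> ennreal"
  assumes [measurable]: "b \<in> borel_measurable borel"
  shows "(\<integral>\<^sup>+x. b (c - x) \<partial>lborel) = (\<integral>\<^sup>+x. b x \<partial>lborel)"
  using nn_integral_real_affine[OF assms, of "-1" c] by simp

lemma nn_integral_lborel_shift:
  fixes b :: "real \<Rightarrow> ennreal"
  assumes [measurable]: "b \<in> borel_measurable borel"
  shows "(\<integral>\<^sup>+x. b (x - c) \<partial>lborel) = (\<integral>\<^sup>+x. b x \<partial>lborel)"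
  using nn_integral_real_affine[OF assms, of 1 "-c"] by simp

lemma nn_integral_convolution_commute:
  fixes a b :: "real \<Rightarrow> ennreal"
  assumes [measurable]: "a \<in> borel_measurable borel" "b \<in> borel_measurable borel"
  shows "(\<integral>\<^sup>+y. a (x - y) * b y \<partial>lborel) = (\<integral>\<^sup>+y. a y * b (x - y) \<partial>lborel)"
  using nn_integral_lborel_reflect[of "\<lambda>y. a (x - y) * b y" x] by simp

lemma nn_integral_convolution:
  fixes a b :: "real \<Rightarrow> ennreal"
  assumes [measurable]: "a \<in> borel_measurable borel" "b \<in> borel_measurable borel"
  shows "(\<integral>\<^sup>+x. (\<integral>\<^sup>+y. a y * b (x - y) \<partial>lborel) \<partial>lborel)
       = (\<integral>\<^sup>+y. a y \<partial>lborel) * (\<integral>\<^sup>+x. b x \<partial>lborel)"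
proof -
  have "(\<integral>\<^sup>+x. (\<integral>\<^sup>+y. a y * b (x - y) \<partial>lborel) \<partial>lborel)
      = (\<integral>\<^sup>+y. (\<integral>\<^sup>+x. a y * b (x - y) \<partial>lborel) \<partial>lborel)"
    by (rule lborel_pair.Fubini'[symmetric]) measurable
  also have "\<dots> = (\<integral>\<^sup>+y. a y * (\<integral>\<^sup>+x. b x \<partial>lborel) \<partial>lborel)"
    by (simp add: nn_integral_cmult nn_integral_lborel_shift)
  finally show ?thesis
    by (simp add: nn_integral_multc)
qed

lemma Cauchy_Schwarz_convolution:
  fixes a b :: "real \<Rightarrow> ennreal"
  assumes [measurable]: "a \<in> borel_measurable borel" "b \<in> borel_measurable borel"
  shows "(\<integral>\<^sup>+y. a y * b (x - y) \<partial>lborel)\<^sup>2 \<le> (\<integral>\<^sup>+y. (a y)\<^sup>2 \<partial>lborel) * (\<integral>\<^sup>+y. (b y)\<^sup>2 \<partial>lborel)"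
  using Cauchy_Schwarz_nn_integral[of a lborel "\<lambda>y. b (x - y)"]
    nn_integral_lborel_reflect[of "\<lambda>y. (b y)\<^sup>2" x]
  by simp

text \<open>Cauchy-Schwarz for the measure \<open>a(y) dy\<close>, then Fubini.\<close>
lemma young_convolution_L1_L2:
  fixes a b :: "real \<Rightarrow> ennreal"
  assumes [measurable]: "a \<in> borel_measurable borel" "b \<in> borel_measurable borel"
  shows "(\<integral>\<^sup>+x. (\<integral>\<^sup>+y. a y * b (x - y) \<partial>lborel)\<^sup>2 \<partial>lborel)
       \<le> (\<integral>\<^sup>+y. a y \<partial>lborel)\<^sup>2 * (\<integral>\<^sup>+x. (b x)\<^sup>2 \<partial>lborel)"
proof -
  have pointwise: "(\<integral>\<^sup>+y. a y * b (x - y) \<partial>lborel)\<^sup>2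
      \<le> (\<integral>\<^sup>+y. a y \<partial>lborel) * (\<integral>\<^sup>+y. a y * (b (x - y))\<^sup>2 \<partial>lborel)" for x
    using Cauchy_Schwarz_nn_integral[of "\<lambda>_. 1" "density lborel a" "\<lambda>y. b (x - y)"]
    by (simp add: nn_integral_density emeasure_density)
  have "(\<integral>\<^sup>+x. (\<integral>\<^sup>+y. a y * b (x - y) \<partial>lborel)\<^sup>2 \<partial>lborel)
      \<le> (\<integral>\<^sup>+x. (\<integral>\<^sup>+y. a y \<partial>lborel) * (\<integral>\<^sup>+y. a y * (b (x - y))\<^sup>2 \<partial>lborel) \<partial>lborel)"
    by (intro nn_integral_mono pointwise)
  also have "\<dots> = (\<integral>\<^sup>+y. a y \<partial>lborel) * ((\<integral>\<^sup>+y. a y \<partial>lborel) * (\<integral>\<^sup>+x. (b x)\<^sup>2 \<partial>lborel))"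
    by (simp add: nn_integral_cmult nn_integral_convolution[of a "\<lambda>x. (b x)\<^sup>2"])
  finally show ?thesis
    by (simp add: power2_eq_square mult.assoc)
qed

lemma weighted_convolution_L2_le:
  fixes k :: "real \<Rightarrow> real \<Rightarrow> ennreal" and a b :: "real \<Rightarrow> ennreal"
  assumes [measurable]: "(\<lambda>(x, y). k x y) \<in> borel_measurable (borel \<Otimes>\<^sub>M borel)"
    "a \<in> borel_measurable borel" "b \<in> borel_measurable borel"
    and k_bound: "\<And>x. (\<integral>\<^sup>+y. (k x y)\<^sup>2 \<partial>lborel) \<le> B"
  shows "(\<integral>\<^sup>+x. (\<integral>\<^sup>+y. k x y * a y * b (x - y) \<partial>lborel)\<^sup>2 \<partial>lborel)
       \<le> B * ((\<integral>\<^sup>+y. (a y)\<^sup>2 \<partial>lborel) * (\<integral>\<^sup>+x. (b x)\<^sup>2 \<partial>lborel))"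
proof -
  have pointwise: "(\<integral>\<^sup>+y. k x y * a y * b (x - y) \<partial>lborel)\<^sup>2
      \<le> B * (\<integral>\<^sup>+y. (a y)\<^sup>2 * (b (x - y))\<^sup>2 \<partial>lborel)" for x
  proof -
    have "(\<integral>\<^sup>+y. k x y * (a y * b (x - y)) \<partial>lborel)\<^sup>2
        \<le> (\<integral>\<^sup>+y. (k x y)\<^sup>2 \<partial>lborel) * (\<integral>\<^sup>+y. (a y * b (x - y))\<^sup>2 \<partial>lborel)"
      by (rule Cauchy_Schwarz_nn_integral) measurable
    also have "\<dots> \<le> B * (\<integral>\<^sup>+y. (a y)\<^sup>2 * (b (x - y))\<^sup>2 \<partial>lborel)"
      unfolding power_mult_distrib by (intro mult_right_mono k_bound) simp
    finally show ?thesis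
      by (simp add: mult.assoc)
  qed
  have "(\<integral>\<^sup>+x. (\<integral>\<^sup>+y. k x y * a y * b (x - y) \<partial>lborel)\<^sup>2 \<partial>lborel)
      \<le> (\<integral>\<^sup>+x. B * (\<integral>\<^sup>+y. (a y)\<^sup>2 * (b (x - y))\<^sup>2 \<partial>lborel) \<partial>lborel)"
    by (intro nn_integral_mono pointwise)
  also have "\<dots> = B * ((\<integral>\<^sup>+y. (a y)\<^sup>2 \<partial>lborel) * (\<integral>\<^sup>+x. (b x)\<^sup>2 \<partial>lborel))"
    by (simp add: nn_integral_cmult nn_integral_convolution[of "\<lambda>y. (a y)\<^sup>2" "\<lambda>x. (b x)\<^sup>2"])
  finally show ?thesis .
qed

lemma nn_integral_square_sum_reflect_le:
  fixes g :: "real \<Rightarrow> ennreal"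
  assumes [measurable]: "g \<in> borel_measurable borel"
  shows "(\<integral>\<^sup>+y. (g y + g (x - y))\<^sup>2 \<partial>lborel) \<le> 4 * (\<integral>\<^sup>+y. (g y)\<^sup>2 \<partial>lborel)"
proof -
  have "(\<integral>\<^sup>+y. (g y + g (x - y))\<^sup>2 \<partial>lborel) \<le> (\<integral>\<^sup>+y. 2 * ((g y)\<^sup>2 + (g (x - y))\<^sup>2) \<partial>lborel)"
    by (intro nn_integral_mono ennreal_power2_add_le)
  also have "\<dots> = 2 * ((\<integral>\<^sup>+y. (g y)\<^sup>2 \<partial>lborel) + (\<integral>\<^sup>+y. (g (x - y))\<^sup>2 \<partial>lborel))"
    by (simp add: nn_integral_cmult nn_integral_add)
  also have "(\<integral>\<^sup>+y. (g (x - y))\<^sup>2 \<partial>lborel) = (\<integral>\<^sup>+y. (g y)\<^sup>2 \<partial>lborel)"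
    by (rule nn_integral_lborel_reflect[of "\<lambda>y. (g y)\<^sup>2"]) measurable
  finally show ?thesis
    by (simp add: mult_2[symmetric] mult.assoc[symmetric])
qed

lemma three_convolutions_L2_le:
  fixes a1 a2 b1 b2 g :: "real \<Rightarrow> ennreal"
  assumes [measurable]: "a1 \<in> borel_measurable borel" "a2 \<in> borel_measurable borel"
    "b1 \<in> borel_measurable borel" "b2 \<in> borel_measurable borel" "g \<in> borel_measurable borel"
  shows "(\<integral>\<^sup>+x. ((\<integral>\<^sup>+y. b1 y * a2 (x - y) \<partial>lborel) + (\<integral>\<^sup>+y. a1 y * b2 (x - y) \<partial>lborel)
           + (\<integral>\<^sup>+y. (g y + g (x - y)) * a1 y * a2 (x - y) \<partial>lborel))\<^sup>2 \<partial>lborel)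
    \<le> 4 * ((\<integral>\<^sup>+x. b1 x \<partial>lborel)\<^sup>2 * (\<integral>\<^sup>+x. (a2 x)\<^sup>2 \<partial>lborel)
      + (\<integral>\<^sup>+x. b2 x \<partial>lborel)\<^sup>2 * (\<integral>\<^sup>+x. (a1 x)\<^sup>2 \<partial>lborel)
      + 4 * (\<integral>\<^sup>+x. (g x)\<^sup>2 \<partial>lborel) * ((\<integral>\<^sup>+x. (a1 x)\<^sup>2 \<partial>lborel) * (\<integral>\<^sup>+x. (a2 x)\<^sup>2 \<partial>lborel)))"
proof -
  define X where "X x = (\<integral>\<^sup>+y. b1 y * a2 (x - y) \<partial>lborel)" for x
  define Y where "Y x = (\<integral>\<^sup>+y. a1 y * b2 (x - y) \<partial>lborel)" for x
  define Z where "Z x = (\<integral>\<^sup>+y. (g y + g (x - y)) * a1 y * a2 (x - y) \<partial>lborel)" for x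
  have [measurable]: "X \<in> borel_measurable borel" "Y \<in> borel_measurable borel" "Z \<in> borel_measurable borel"
    unfolding X_def Y_def Z_def by measurable
  have "(\<integral>\<^sup>+x. (X x + Y x + Z x)\<^sup>2 \<partial>lborel) \<le> (\<integral>\<^sup>+x. 4 * ((X x)\<^sup>2 + (Y x)\<^sup>2 + (Z x)\<^sup>2) \<partial>lborel)"
    by (intro nn_integral_mono ennreal_power2_add3_le)
  also have "\<dots> = 4 * ((\<integral>\<^sup>+x. (X x)\<^sup>2 \<partial>lborel) + (\<integral>\<^sup>+x. (Y x)\<^sup>2 \<partial>lborel) + (\<integral>\<^sup>+x. (Z x)\<^sup>2 \<partial>lborel))"
    by (simp add: nn_integral_cmult nn_integral_add)
  also have "\<dots> \<le> 4 * ((\<integral>\<^sup>+x. b1 x \<partial>lborel)\<^sup>2 * (\<integral>\<^sup>+x. (a2 x)\<^sup>2 \<partial>lborel)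
      + (\<integral>\<^sup>+x. b2 x \<partial>lborel)\<^sup>2 * (\<integral>\<^sup>+x. (a1 x)\<^sup>2 \<partial>lborel)
      + 4 * (\<integral>\<^sup>+x. (g x)\<^sup>2 \<partial>lborel) * ((\<integral>\<^sup>+x. (a1 x)\<^sup>2 \<partial>lborel) * (\<integral>\<^sup>+x. (a2 x)\<^sup>2 \<partial>lborel)))"
  proof (intro mult_left_mono add_mono)
    show "(\<integral>\<^sup>+x. (X x)\<^sup>2 \<partial>lborel) \<le> (\<integral>\<^sup>+x. b1 x \<partial>lborel)\<^sup>2 * (\<integral>\<^sup>+x. (a2 x)\<^sup>2 \<partial>lborel)"
      unfolding X_def by (rule young_convolution_L1_L2) measurable
    have "Y x = (\<integral>\<^sup>+y. b2 y * a1 (x - y) \<partial>lborel)" for x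
      unfolding Y_def by (subst nn_integral_convolution_commute[symmetric]) (simp_all add: mult.commute)
    then show "(\<integral>\<^sup>+x. (Y x)\<^sup>2 \<partial>lborel) \<le> (\<integral>\<^sup>+x. b2 x \<partial>lborel)\<^sup>2 * (\<integral>\<^sup>+x. (a1 x)\<^sup>2 \<partial>lborel)"
      by (simp add: young_convolution_L1_L2)
    have "(\<integral>\<^sup>+y. (g y + g (x - y))\<^sup>2 \<partial>lborel) \<le> 4 * (\<integral>\<^sup>+y. (g y)\<^sup>2 \<partial>lborel)" for x
      by (rule nn_integral_square_sum_reflect_le) measurable
    then show "(\<integral>\<^sup>+x. (Z x)\<^sup>2 \<partial>lborel)
        \<le> 4 * (\<integral>\<^sup>+x. (g x)\<^sup>2 \<partial>lborel) * ((\<integral>\<^sup>+x. (a1 x)\<^sup>2 \<partial>lborel) * (\<integral>\<^sup>+x. (a2 x)\<^sup>2 \<partial>lborel))"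
      unfolding Z_def by (rule weighted_convolution_L2_le[rotated 3]) measurable
  qed simp
  finally show ?thesis
    unfolding X_def Y_def Z_def .
qed

lemma holder_inequality_scaled:
  fixes F G :: "'a \<Rightarrow> real" and p q \<alpha> \<beta> :: real
  assumes [measurable]: "F \<in> borel_measurable M" "G \<in> borel_measurable M"
    and nonneg: "\<And>x. 0 \<le> F x" "\<And>x. 0 \<le> G x"
    and pq: "p > 1" "q > 1" "1/p + 1/q = 1" and "\<alpha> > 0" "\<beta> > 0"
    and F: "(\<integral>\<^sup>+x. ennreal (F x powr p) \<partial>M) \<le> ennreal (\<alpha> powr p)"
    and G: "(\<integral>\<^sup>+x. ennreal (G x powr q) \<partial>M) \<le> ennreal (\<beta> powr q)"
  shows "(\<integral>\<^sup>+x. ennreal (F x * G x) \<partial>M) \<le> ennreal (\<alpha> * \<beta>)"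
proof -
  define a where "a = \<alpha> * \<beta> / (p * \<alpha> powr p)"
  define b where "b = \<alpha> * \<beta> / (q * \<beta> powr q)"
  have "a \<ge> 0" "b \<ge> 0"
    using \<open>\<alpha> > 0\<close> \<open>\<beta> > 0\<close> pq by (simp_all add: a_def b_def)
  have young: "F x * G x \<le> a * F x powr p + b * G x powr q" for x
  proof -
    have "F x * G x = \<alpha> * \<beta> * ((F x / \<alpha>) * (G x / \<beta>))"
      using \<open>\<alpha> > 0\<close> \<open>\<beta> > 0\<close> by simp
    also have "\<dots> \<le> \<alpha> * \<beta> * ((F x / \<alpha>) powr p / p + (G x / \<beta>) powr q / q)"
      using \<open>\<alpha> > 0\<close> \<open>\<beta> > 0\<close> nonneg pq by (intro mult_left_mono Youngs_inequality) auto
    also have "\<dots> = a * F x powr p + b * G x powr q"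
      using \<open>\<alpha> > 0\<close> \<open>\<beta> > 0\<close> nonneg by (simp add: a_def b_def powr_divide field_simps)
    finally show ?thesis .
  qed
  have "(\<integral>\<^sup>+x. ennreal (F x * G x) \<partial>M)
      \<le> (\<integral>\<^sup>+x. ennreal a * ennreal (F x powr p) + ennreal b * ennreal (G x powr q) \<partial>M)"
  proof (rule nn_integral_mono)
    fix x
    have "ennreal (F x * G x) \<le> ennreal (a * F x powr p + b * G x powr q)"
      using young by (rule ennreal_leI)
    also have "\<dots> = ennreal a * ennreal (F x powr p) + ennreal b * ennreal (G x powr q)"
      using \<open>a \<ge> 0\<close> \<open>b \<ge> 0\<close> by (simp add: ennreal_mult)
    finally show "ennreal (F x * G x) \<le> \<dots>" .
  qed
  also have "\<dots> = ennreal a * (\<integral>\<^sup>+x. ennreal (F x powr p) \<partial>M)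
      + ennreal b * (\<integral>\<^sup>+x. ennreal (G x powr q) \<partial>M)"
    by (simp add: nn_integral_add nn_integral_cmult)
  also have "\<dots> \<le> ennreal a * ennreal (\<alpha> powr p) + ennreal b * ennreal (\<beta> powr q)"
    using F G by (intro add_mono mult_left_mono) auto
  also have "\<dots> = ennreal (\<alpha> * \<beta> * (1/p + 1/q))"
    using \<open>a \<ge> 0\<close> \<open>b \<ge> 0\<close> \<open>\<alpha> > 0\<close> \<open>\<beta> > 0\<close> pq
    by (simp add: a_def b_def ennreal_plus[symmetric] ennreal_mult[symmetric] field_simps)
  finally show ?thesis
    using pq by simp
qed

lemma holder_inequality:
  fixes F G :: "'a \<Rightarrow> real" and p q L D :: real
  assumes [measurable]: "F \<in> borel_measurable M" "G \<in> borel_measurable M"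
    and nonneg: "\<And>x. 0 \<le> F x" "\<And>x. 0 \<le> G x"
    and pq: "p > 1" "q > 1" "1/p + 1/q = 1"
    and F: "(\<integral>\<^sup>+x. ennreal (F x powr p) \<partial>M) \<le> ennreal L"
    and G: "(\<integral>\<^sup>+x. ennreal (G x powr q) \<partial>M) \<le> ennreal D"
    and "0 \<le> L" "0 \<le> D"
  shows "(\<integral>\<^sup>+x. ennreal (F x * G x) \<partial>M) \<le> ennreal (L powr (1/p) * D powr (1/q))"
proof -
  \<comment> \<open>The norms may vanish, so scale by slightly larger constants and let \<open>\<eta> \<rightarrow> 0\<close>.\<close>
  have bound: "(\<integral>\<^sup>+x. ennreal (F x * G x) \<partial>M)
      \<le> ennreal ((L powr (1/p) + \<eta>) * (D powr (1/q) + \<eta>))" if "0 < \<eta>" for \<eta>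
  proof (rule holder_inequality_scaled[OF _ _ nonneg pq])
    have "L = (L powr (1/p)) powr p" "D = (D powr (1/q)) powr q"
      using pq \<open>0 \<le> L\<close> \<open>0 \<le> D\<close> by (simp_all add: powr_powr)
    moreover have "(L powr (1/p)) powr p \<le> (L powr (1/p) + \<eta>) powr p"
      "(D powr (1/q)) powr q \<le> (D powr (1/q) + \<eta>) powr q"
      using pq \<open>0 < \<eta>\<close> by (auto intro!: powr_mono2)
    ultimately show "(\<integral>\<^sup>+x. ennreal (F x powr p) \<partial>M) \<le> ennreal ((L powr (1/p) + \<eta>) powr p)"
      "(\<integral>\<^sup>+x. ennreal (G x powr q) \<partial>M) \<le> ennreal ((D powr (1/q) + \<eta>) powr q)"
      using F G by (metis ennreal_leI order_trans)+
  qed (use \<open>0 < \<eta>\<close> in \<open>simp_all add: add_nonneg_pos\<close>)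
  have eventually_bound: "\<forall>\<^sub>F \<eta> in at_right 0. (\<integral>\<^sup>+x. ennreal (F x * G x) \<partial>M)
      \<le> ennreal ((L powr (1/p) + \<eta>) * (D powr (1/q) + \<eta>))"
    using eventually_at_right_less by (rule eventually_mono) (rule bound)
  have limit: "((\<lambda>\<eta>. ennreal ((L powr (1/p) + \<eta>) * (D powr (1/q) + \<eta>)))
      \<longlongrightarrow> ennreal (L powr (1/p) * D powr (1/q))) (at_right 0)"
    by (auto intro!: tendsto_eq_intros)
  show ?thesis
    using limit eventually_bound trivial_limit_at_right_real by (rule tendsto_lowerbound)
qed

lemma nn_integral_even_le:
  fixes b :: "real \<Rightarrow> ennreal"
  assumes [measurable]: "b \<in> borel_measurable borel" and even: "\<And>x. b (- x) = b x"
  shows "(\<integral>\<^sup>+x. b x \<partial>lborel) \<le> 2 * (\<integral>\<^sup>+x\<in>{0..}. b x \<partial>lborel)"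
proof -
  have "(\<integral>\<^sup>+x. b x \<partial>lborel)
      \<le> (\<integral>\<^sup>+x. b x * indicator {0..} x + b (- x) * indicator {0..} (- x) \<partial>lborel)"
    by (intro nn_integral_mono) (auto simp: even split: split_indicator)
  also have "\<dots> = (\<integral>\<^sup>+x\<in>{0..}. b x \<partial>lborel) + (\<integral>\<^sup>+x. b (- x) * indicator {0..} (- x) \<partial>lborel)"
    by (rule nn_integral_add) measurable
  also have "(\<integral>\<^sup>+x. b (- x) * indicator {0..} (- x) \<partial>lborel) = (\<integral>\<^sup>+x\<in>{0..}. b x \<partial>lborel)"
    using nn_integral_lborel_reflect[of "\<lambda>x. b x * indicator {0..} x" 0] by simp
  finally show ?thesis
    by (simp add: mult_2)
qed

lemma nn_integral_abs_powr_near_0: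
  fixes a :: real
  assumes "0 \<le> a" "a < 1"
  shows "(\<integral>\<^sup>+x\<in>{-1<..<1}. ennreal (\<bar>x\<bar> powr - a) \<partial>lborel) \<le> ennreal (2 / (1 - a))"
proof -
  have "((\<lambda>x. x powr - a) has_integral (1 / (1 - a))) {0..1}"
    using has_integral_powr_from_0[of "- a" 1] assms by simp
  then have "(\<integral>\<^sup>+x\<in>{0..1}. ennreal (x powr - a) \<partial>lborel) = ennreal (1 / (1 - a))"
    by (intro nn_integral_has_integral_lebesgue') simp_all
  moreover have "(\<integral>\<^sup>+x\<in>{0..}. ennreal (\<bar>x\<bar> powr - a) * indicator {-1<..<1} x \<partial>lborel)
      \<le> (\<integral>\<^sup>+x\<in>{0..1}. ennreal (x powr - a) \<partial>lborel)"
    by (intro nn_integral_mono) (auto split: split_indicator)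
  ultimately have "(\<integral>\<^sup>+x\<in>{-1<..<1}. ennreal (\<bar>x\<bar> powr - a) \<partial>lborel) \<le> 2 * ennreal (1 / (1 - a))"
    using nn_integral_even_le[of "\<lambda>x. ennreal (\<bar>x\<bar> powr - a) * indicator {-1<..<1} x"]
    by (fastforce split: split_indicator intro: order_trans mult_left_mono)
  then show ?thesis
    using assms ennreal_mult[of 2 "1 / (1 - a)"] by simp
qed

lemma nn_integral_abs_powr_tail:
  fixes a :: real
  assumes "1 < a"
  shows "(\<integral>\<^sup>+x\<in>{x. 1 \<le> \<bar>x\<bar>}. ennreal (\<bar>x\<bar> powr - a) \<partial>lborel) \<le> ennreal (2 / (a - 1))"
proof -
  have "- (1 / (1 - a)) = 1 / (a - 1)"
    by (simp add: divide_simps)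
  then have "((\<lambda>x. x powr - a) has_integral (1 / (a - 1))) {1..}"
    using has_integral_powr_to_inf[of "- a" 1] assms by simp
  then have "(\<integral>\<^sup>+x\<in>{1..}. ennreal (x powr - a) \<partial>lborel) = ennreal (1 / (a - 1))"
    by (intro nn_integral_has_integral_lebesgue') simp_all
  moreover have "(\<integral>\<^sup>+x\<in>{0..}. ennreal (\<bar>x\<bar> powr - a) * indicator {x. 1 \<le> \<bar>x\<bar>} x \<partial>lborel)
      \<le> (\<integral>\<^sup>+x\<in>{1..}. ennreal (x powr - a) \<partial>lborel)"
    by (intro nn_integral_mono) (auto split: split_indicator)
  ultimately have "(\<integral>\<^sup>+x\<in>{x. 1 \<le> \<bar>x\<bar>}. ennreal (\<bar>x\<bar> powr - a) \<partial>lborel) \<le> 2 * ennreal (1 / (a - 1))"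
    using nn_integral_even_le[of "\<lambda>x. ennreal (\<bar>x\<bar> powr - a) * indicator {x. 1 \<le> \<bar>x\<bar>} x"]
    by (fastforce split: split_indicator intro: order_trans mult_left_mono)
  then show ?thesis
    using assms ennreal_mult[of 2 "1 / (a - 1)"] by simp
qed

section \<open>The KdV kernel\<close>

lemma japan_pos [simp]: "0 < japan x"
  by (simp add: japan_def add_pos_nonneg)

lemma japan_nonneg [simp]: "0 \<le> japan x"
  by (rule less_imp_le[OF japan_pos])

lemma japan_nonzero [simp]: "japan x \<noteq> 0"
  by (rule less_imp_neq[OF japan_pos, symmetric])

lemma one_le_japan: "1 \<le> japan x"
  by (simp add: japan_def)

lemma abs_le_japan: "\<bar>x\<bar> \<le> japan x"
  unfolding japan_def by (rule real_le_rsqrt) simp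

lemma japan_le_one_plus_abs: "japan x \<le> 1 + \<bar>x\<bar>"
  unfolding japan_def by (rule real_sqrt_le_iff[THEN iffD2, of _ "(1 + \<bar>x\<bar>)\<^sup>2", simplified])
    (simp add: power2_eq_square algebra_simps)

lemma japan_le_double:
  assumes "\<bar>x\<bar> \<le> 2 * \<bar>y\<bar>"
  shows "japan x \<le> 2 * japan y"
proof -
  have "x\<^sup>2 \<le> (2 * \<bar>y\<bar>)\<^sup>2"
    using assms by (metis abs_ge_zero power2_abs power_mono)
  then have "sqrt (1 + x\<^sup>2) \<le> sqrt (2\<^sup>2 * (1 + y\<^sup>2))"
    by (intro real_sqrt_le_mono) (simp add: power_mult_distrib)
  also have "\<dots> = 2 * sqrt (1 + y\<^sup>2)"
    by (simp only: real_sqrt_mult real_sqrt_abs abs_numeral)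
  finally show ?thesis
    by (simp add: japan_def)
qed

lemma japan_le_double_abs:
  assumes "1 \<le> \<bar>x\<bar>"
  shows "japan x \<le> 2 * \<bar>x\<bar>"
  using japan_le_one_plus_abs[of x] assms by linarith

lemma japan_measurable [measurable]: "japan \<in> borel_measurable borel"
  unfolding japan_def by measurable

definition T_kernel :: "real \<Rightarrow> real \<Rightarrow> real \<Rightarrow> real" where
  "T_kernel \<sigma> \<xi> \<eta> = \<bar>\<xi>\<bar> / japan (kdv_phase \<xi> \<eta> (\<xi> - \<eta>)) powr \<sigma>"

lemma T_kernel_measurable [measurable]:
  "(\<lambda>(\<xi>, \<eta>). T_kernel \<sigma> \<xi> \<eta>) \<in> borel_measurable (borel \<Otimes>\<^sub>M borel)"
  unfolding T_kernel_def kdv_phase_def by measurable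

lemma T_kernel_nonneg: "0 \<le> T_kernel \<sigma> \<xi> \<eta>"
  by (simp add: T_kernel_def)

lemma T_kernel_le_abs:
  assumes "0 \<le> \<sigma>"
  shows "T_kernel \<sigma> \<xi> \<eta> \<le> \<bar>\<xi>\<bar>"
proof -
  have "1 \<le> japan (kdv_phase \<xi> \<eta> (\<xi> - \<eta>)) powr \<sigma>"
    using one_le_japan assms by (rule ge_one_powr_ge_zero)
  then show ?thesis
    by (simp add: T_kernel_def divide_le_eq mult_le_cancel_left1)
qed

lemma T_kernel_swap: "T_kernel \<sigma> \<xi> (\<xi> - \<eta>) = T_kernel \<sigma> \<xi> \<eta>"
  by (simp add: T_kernel_def kdv_phase_def mult_ac)

lemma abs_kdv_phase: "\<bar>kdv_phase \<xi> \<eta> (\<xi> - \<eta>)\<bar> = 3 * \<bar>\<xi>\<bar> * \<bar>\<eta>\<bar> * \<bar>\<xi> - \<eta>\<bar>"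
  by (simp add: kdv_phase_def abs_mult)

text \<open>Read \<open>W\<close>, \<open>x\<close>, \<open>J\<close> as \<open>japan \<xi>\<close>, \<open>\<bar>\<xi>\<bar>\<close>, \<open>japan \<Phi>\<close>: after the resonance is used, the leftover
  power \<open>x powr (1 + \<epsilon> - 2 * \<sigma>)\<close> is at most 1.\<close>
lemma powr_weight_over_resonance_le:
  fixes W x m J \<epsilon> \<sigma> :: real
  assumes "1 \<le> x" "0 < m" "x\<^sup>2 * m \<le> J" "0 < W" "W \<le> 2 * x"
    and "0 \<le> \<epsilon>" "0 \<le> \<sigma>" "1 + \<epsilon> \<le> 2 * \<sigma>"
  shows "W powr \<epsilon> * (x / J powr \<sigma>) \<le> 2 powr \<epsilon> * m powr - \<sigma>"
proof -
  have "0 < x\<^sup>2 * m"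
    using assms(1,2) by simp
  with assms(3) have "0 < J"
    by linarith
  have "ln W \<le> ln (2 * x)"
    using assms(1,4,5) by simp
  then have lnW: "ln W \<le> ln 2 + ln x"
    using assms(1) by (simp add: ln_mult)
  have "ln (x\<^sup>2 * m) \<le> ln J"
    using assms(1-3) \<open>0 < J\<close> by (subst ln_le_cancel_iff) simp_all
  then have lnJ: "2 * ln x + ln m \<le> ln J"
    using assms(1,2) by (simp add: ln_mult ln_realpow)
  have "ln (W powr \<epsilon> * (x / J powr \<sigma>)) = \<epsilon> * ln W + ln x - \<sigma> * ln J"
    using assms(1,4) \<open>0 < J\<close> by (simp add: ln_mult ln_div)
  also have "\<dots> \<le> \<epsilon> * ln 2 - \<sigma> * ln m + (1 + \<epsilon> - 2 * \<sigma>) * ln x"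
    using mult_left_mono[OF lnW assms(6)] mult_left_mono[OF lnJ assms(7)]
    by (simp add: algebra_simps)
  also have "\<dots> \<le> \<epsilon> * ln 2 - \<sigma> * ln m"
    using assms(1,8) by (simp add: mult_nonpos_nonneg)
  also have "\<dots> = ln (2 powr \<epsilon> * m powr - \<sigma>)"
    using assms(2) by (simp add: ln_mult)
  finally show ?thesis
    using assms(1,2,4) \<open>0 < J\<close> by simp
qed

lemma T_kernel_decay:
  assumes "1 \<le> \<bar>\<xi>\<bar>" "0 < m" "\<xi>\<^sup>2 * m \<le> \<bar>kdv_phase \<xi> \<eta> (\<xi> - \<eta>)\<bar>"
    and "0 \<le> \<epsilon>" "0 \<le> \<sigma>" "1 + \<epsilon> \<le> 2 * \<sigma>"
  shows "japan \<xi> powr \<epsilon> * T_kernel \<sigma> \<xi> \<eta> \<le> 2 powr \<epsilon> * m powr - \<sigma>"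
  unfolding T_kernel_def
proof (rule powr_weight_over_resonance_le)
  show "\<bar>\<xi>\<bar>\<^sup>2 * m \<le> japan (kdv_phase \<xi> \<eta> (\<xi> - \<eta>))"
    using assms(3) abs_le_japan by (simp add: order_trans)
qed (use assms japan_pos japan_le_double_abs in auto)

lemma T_kernel_high_low:
  assumes "2 \<le> \<bar>\<xi>\<bar>" "\<bar>\<eta>\<bar> < 1" "\<eta> \<noteq> 0"
    and "0 \<le> s" "0 \<le> \<epsilon>" "0 \<le> \<sigma>" "1 + \<epsilon> \<le> 2 * \<sigma>"
  shows "japan \<xi> powr (s + \<epsilon>) * T_kernel \<sigma> \<xi> \<eta>
      \<le> 2 powr (s + \<epsilon>) * (\<bar>\<eta>\<bar> powr - \<sigma> * japan (\<xi> - \<eta>) powr s)"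
proof -
  have "\<bar>\<xi>\<bar> \<le> 2 * \<bar>\<xi> - \<eta>\<bar>"
    using assms(1,2) abs_triangle_ineq[of "\<xi> - \<eta>" \<eta>] by simp
  have "\<xi>\<^sup>2 * \<bar>\<eta>\<bar> = \<bar>\<xi>\<bar> * \<bar>\<xi>\<bar> * \<bar>\<eta>\<bar>"
    by (simp add: power2_eq_square)
  also have "\<dots> \<le> \<bar>\<xi>\<bar> * (3 * \<bar>\<xi> - \<eta>\<bar>) * \<bar>\<eta>\<bar>"
    using \<open>\<bar>\<xi>\<bar> \<le> 2 * \<bar>\<xi> - \<eta>\<bar>\<close> by (intro mult_right_mono mult_left_mono) auto
  also have "\<dots> = \<bar>kdv_phase \<xi> \<eta> (\<xi> - \<eta>)\<bar>"
    unfolding abs_kdv_phase by simp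
  finally have decay: "japan \<xi> powr \<epsilon> * T_kernel \<sigma> \<xi> \<eta> \<le> 2 powr \<epsilon> * \<bar>\<eta>\<bar> powr - \<sigma>"
    using assms by (intro T_kernel_decay) auto
  have "japan \<xi> powr s \<le> (2 * japan (\<xi> - \<eta>)) powr s"
    using \<open>\<bar>\<xi>\<bar> \<le> 2 * \<bar>\<xi> - \<eta>\<bar>\<close> assms(4) by (intro powr_mono2 japan_le_double) auto
  have "japan \<xi> powr (s + \<epsilon>) * T_kernel \<sigma> \<xi> \<eta> = japan \<xi> powr s * (japan \<xi> powr \<epsilon> * T_kernel \<sigma> \<xi> \<eta>)"
    by (simp add: powr_add)
  also have "\<dots> \<le> (2 * japan (\<xi> - \<eta>)) powr s * (2 powr \<epsilon> * \<bar>\<eta>\<bar> powr - \<sigma>)"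
    by (rule mult_mono[OF \<open>japan \<xi> powr s \<le> _\<close> decay]) (simp_all add: T_kernel_nonneg)
  also have "\<dots> = 2 powr (s + \<epsilon>) * (\<bar>\<eta>\<bar> powr - \<sigma> * japan (\<xi> - \<eta>) powr s)"
    using japan_pos[of "\<xi> - \<eta>"] by (simp add: powr_mult powr_add)
  finally show ?thesis .
qed

lemma japan_mult_min_le:
  assumes "1 \<le> \<bar>\<xi>\<bar>"
  shows "japan \<xi> * min \<bar>\<eta>\<bar> \<bar>\<xi> - \<eta>\<bar> \<le> 4 * (japan \<eta> * japan (\<xi> - \<eta>))"
proof -
  define m M where "m = min \<bar>\<eta>\<bar> \<bar>\<xi> - \<eta>\<bar>" and "M = max \<bar>\<eta>\<bar> \<bar>\<xi> - \<eta>\<bar>"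
  have "0 \<le> m" "\<bar>\<xi>\<bar> \<le> 2 * M" "m * M = \<bar>\<eta>\<bar> * \<bar>\<xi> - \<eta>\<bar>"
    using abs_triangle_ineq[of \<eta> "\<xi> - \<eta>"] by (auto simp: m_def M_def min_def max_def mult.commute)
  have "japan \<xi> * m \<le> 2 * \<bar>\<xi>\<bar> * m"
    using japan_le_double_abs[OF assms] \<open>0 \<le> m\<close> by (simp add: mult_right_mono)
  also have "\<dots> \<le> 2 * (2 * M) * m"
    using \<open>\<bar>\<xi>\<bar> \<le> 2 * M\<close> \<open>0 \<le> m\<close> by (intro mult_right_mono) simp_all
  also have "\<dots> = 4 * (\<bar>\<eta>\<bar> * \<bar>\<xi> - \<eta>\<bar>)"
    using \<open>m * M = _\<close> by (simp add: mult_ac)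
  also have "\<dots> \<le> 4 * (japan \<eta> * japan (\<xi> - \<eta>))"
    using abs_le_japan by (intro mult_left_mono mult_mono) auto
  finally show ?thesis
    unfolding m_def .
qed

lemma T_kernel_high_high:
  assumes "2 \<le> \<bar>\<xi>\<bar>" "1 \<le> \<bar>\<eta>\<bar>" "1 \<le> \<bar>\<xi> - \<eta>\<bar>"
    and "0 \<le> s" "0 \<le> \<epsilon>" "0 \<le> \<sigma>" "1 + \<epsilon> \<le> 2 * \<sigma>"
  shows "japan \<xi> powr (s + \<epsilon>) * T_kernel \<sigma> \<xi> \<eta>
      \<le> 2 powr (2 * s + \<epsilon>) * (min \<bar>\<eta>\<bar> \<bar>\<xi> - \<eta>\<bar> powr - (\<sigma> + s) * (japan \<eta> * japan (\<xi> - \<eta>)) powr s)"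
proof -
  define m where "m = min \<bar>\<eta>\<bar> \<bar>\<xi> - \<eta>\<bar>"
  define M where "M = max \<bar>\<eta>\<bar> \<bar>\<xi> - \<eta>\<bar>"
  have "1 \<le> m" "m * M = \<bar>\<eta>\<bar> * \<bar>\<xi> - \<eta>\<bar>"
    using assms(2,3) by (auto simp: m_def M_def min_def max_def mult.commute)
  have "\<bar>\<xi>\<bar> \<le> 2 * M"
    using abs_triangle_ineq[of \<eta> "\<xi> - \<eta>"] unfolding M_def by (simp add: max_def)
  have "\<xi>\<^sup>2 * m = \<bar>\<xi>\<bar> * \<bar>\<xi>\<bar> * m"
    by (simp add: power2_eq_square)
  also have "\<dots> \<le> \<bar>\<xi>\<bar> * (3 * M) * m"
    using \<open>\<bar>\<xi>\<bar> \<le> 2 * M\<close> \<open>1 \<le> m\<close> by (intro mult_right_mono mult_left_mono) auto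
  also have "\<dots> = \<bar>kdv_phase \<xi> \<eta> (\<xi> - \<eta>)\<bar>"
    unfolding abs_kdv_phase using \<open>m * M = _\<close> by (simp add: mult_ac)
  finally have decay: "japan \<xi> powr \<epsilon> * T_kernel \<sigma> \<xi> \<eta> \<le> 2 powr \<epsilon> * m powr - \<sigma>"
    using assms \<open>1 \<le> m\<close> by (intro T_kernel_decay) auto
  have "japan \<xi> * m \<le> 4 * (japan \<eta> * japan (\<xi> - \<eta>))"
    unfolding m_def using assms(1) by (intro japan_mult_min_le) simp
  then have "(japan \<xi> * m) powr s \<le> (4 * (japan \<eta> * japan (\<xi> - \<eta>))) powr s"
    using assms(4) \<open>1 \<le> m\<close> japan_pos[of \<xi>] by (intro powr_mono2) auto
  also have "\<dots> = 2 powr (2 * s) * (japan \<eta> * japan (\<xi> - \<eta>)) powr s"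
    using powr_powr[of 2 2 s] by (simp add: powr_mult)
  finally have weights: "(japan \<xi> * m) powr s \<le> 2 powr (2 * s) * (japan \<eta> * japan (\<xi> - \<eta>)) powr s" .
  have "japan \<xi> powr (s + \<epsilon>) * T_kernel \<sigma> \<xi> \<eta> = japan \<xi> powr s * (japan \<xi> powr \<epsilon> * T_kernel \<sigma> \<xi> \<eta>)"
    by (simp add: powr_add)
  also have "\<dots> \<le> japan \<xi> powr s * (2 powr \<epsilon> * m powr - \<sigma>)"
    using decay by (rule mult_left_mono) simp
  also have "\<dots> = 2 powr \<epsilon> * ((japan \<xi> * m) powr s * m powr - (\<sigma> + s))"
    using \<open>1 \<le> m\<close> japan_pos[of \<xi>] by (simp add: powr_mult powr_diff powr_minus divide_simps)
  also have "\<dots> \<le> 2 powr \<epsilon> * (2 powr (2 * s) * (japan \<eta> * japan (\<xi> - \<eta>)) powr s * m powr - (\<sigma> + s))"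
    using weights by (intro mult_left_mono mult_right_mono) simp_all
  also have "\<dots> = 2 powr (2 * s + \<epsilon>) * (m powr - (\<sigma> + s) * (japan \<eta> * japan (\<xi> - \<eta>)) powr s)"
    by (simp add: powr_add)
  finally show ?thesis
    unfolding m_def .
qed

definition near_zero_weight :: "real \<Rightarrow> real \<Rightarrow> real" where
  "near_zero_weight \<sigma> x = indicator {-1<..<1} x * \<bar>x\<bar> powr - \<sigma>"

definition tail_weight :: "real \<Rightarrow> real \<Rightarrow> real" where
  "tail_weight p x = indicator {x. 1 \<le> \<bar>x\<bar>} x * \<bar>x\<bar> powr - p"

lemma near_zero_weight_nonneg: "0 \<le> near_zero_weight \<sigma> x"
  by (simp add: near_zero_weight_def)

lemma tail_weight_nonneg: "0 \<le> tail_weight p x"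
  by (simp add: tail_weight_def)

lemma near_zero_weight_measurable [measurable]: "near_zero_weight \<sigma> \<in> borel_measurable borel"
  unfolding near_zero_weight_def by measurable

lemma tail_weight_measurable [measurable]: "tail_weight p \<in> borel_measurable borel"
  unfolding tail_weight_def by measurable

lemma tail_weight_square_integral_le:
  assumes "1 / 2 < p"
  shows "(\<integral>\<^sup>+x. (ennreal (tail_weight p x))\<^sup>2 \<partial>lborel) \<le> ennreal (2 / (2 * p - 1))"
proof -
  have "(\<integral>\<^sup>+x. (ennreal (tail_weight p x))\<^sup>2 \<partial>lborel)
      = (\<integral>\<^sup>+x\<in>{x. 1 \<le> \<bar>x\<bar>}. ennreal (\<bar>x\<bar> powr - (2 * p)) \<partial>lborel)"
  proof (intro nn_integral_cong)
    fix x :: real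
    have "(\<bar>x\<bar> powr - p)\<^sup>2 = \<bar>x\<bar> powr - (2 * p)"
      by (simp add: power2_eq_square flip: powr_add)
    then show "(ennreal (tail_weight p x))\<^sup>2 = ennreal (\<bar>x\<bar> powr - (2 * p)) * indicator {x. 1 \<le> \<bar>x\<bar>} x"
      by (simp add: tail_weight_def ennreal_power split: split_indicator)
  qed
  also have "\<dots> \<le> ennreal (2 / (2 * p - 1))"
    using assms by (intro nn_integral_abs_powr_tail) simp
  finally show ?thesis .
qed

text \<open>The hypothesis \<open>\<eta> \<noteq> 0\<close> matters: \<open>0 powr - \<sigma> = 0\<close>, so the weight vanishes at the singularity.\<close>
lemma T_kernel_weighted_le:
  assumes "2 \<le> \<bar>\<xi>\<bar>" "\<eta> \<noteq> 0" "\<eta> \<noteq> \<xi>"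
    and "0 \<le> s" "0 \<le> \<epsilon>" "0 \<le> \<sigma>" "1 + \<epsilon> \<le> 2 * \<sigma>"
  shows "japan \<xi> powr (s + \<epsilon>) * T_kernel \<sigma> \<xi> \<eta> \<le> 2 powr (2 * s + \<epsilon>) *
      (near_zero_weight \<sigma> \<eta> * japan (\<xi> - \<eta>) powr s + near_zero_weight \<sigma> (\<xi> - \<eta>) * japan \<eta> powr s
       + (tail_weight (\<sigma> + s) \<eta> + tail_weight (\<sigma> + s) (\<xi> - \<eta>)) * (japan \<eta> * japan (\<xi> - \<eta>)) powr s)"
    (is "_ \<le> ?c * (?A + ?B + ?C)")
proof -
  have "0 \<le> ?A" "0 \<le> ?B" "0 \<le> ?C"
    by (simp_all add: near_zero_weight_nonneg tail_weight_nonneg)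
  have "2 powr (s + \<epsilon>) \<le> ?c"
    using assms(4) by simp
  consider "\<bar>\<eta>\<bar> < 1" | "\<bar>\<xi> - \<eta>\<bar> < 1" | "1 \<le> \<bar>\<eta>\<bar>" "1 \<le> \<bar>\<xi> - \<eta>\<bar>"
    by linarith
  then have "japan \<xi> powr (s + \<epsilon>) * T_kernel \<sigma> \<xi> \<eta> \<le> 2 powr (s + \<epsilon>) * ?A \<or>
      japan \<xi> powr (s + \<epsilon>) * T_kernel \<sigma> \<xi> \<eta> \<le> 2 powr (s + \<epsilon>) * ?B \<or>
      japan \<xi> powr (s + \<epsilon>) * T_kernel \<sigma> \<xi> \<eta> \<le> ?c * ?C"
  proof cases
    case 1
    then show ?thesis
      using T_kernel_high_low[of \<xi> \<eta> s \<epsilon> \<sigma>] assms by (simp add: near_zero_weight_def indicator_def abs_less_iff)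
  next
    case 2
    then show ?thesis
      using T_kernel_high_low[of \<xi> "\<xi> - \<eta>" s \<epsilon> \<sigma>] assms
      by (simp add: near_zero_weight_def indicator_def abs_less_iff T_kernel_swap mult_ac)
  next
    case 3
    have "min \<bar>\<eta>\<bar> \<bar>\<xi> - \<eta>\<bar> powr - (\<sigma> + s) \<le> tail_weight (\<sigma> + s) \<eta> + tail_weight (\<sigma> + s) (\<xi> - \<eta>)"
      using 3 by (simp add: tail_weight_def min_def)
    then have "?c * (min \<bar>\<eta>\<bar> \<bar>\<xi> - \<eta>\<bar> powr - (\<sigma> + s) * (japan \<eta> * japan (\<xi> - \<eta>)) powr s) \<le> ?c * ?C"
      by (intro mult_left_mono mult_right_mono) simp_all
    then show ?thesis
      using T_kernel_high_high[of \<xi> \<eta> s \<epsilon> \<sigma>] 3 assms by linarith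
  qed
  moreover have "2 powr (s + \<epsilon>) * ?A \<le> ?c * (?A + ?B + ?C)" "2 powr (s + \<epsilon>) * ?B \<le> ?c * (?A + ?B + ?C)"
    "?c * ?C \<le> ?c * (?A + ?B + ?C)"
    using \<open>0 \<le> ?A\<close> \<open>0 \<le> ?B\<close> \<open>0 \<le> ?C\<close> \<open>2 powr (s + \<epsilon>) \<le> ?c\<close>
    by (auto intro!: mult_mono)
  ultimately show ?thesis
    by (meson order_trans)
qed

lemma T_kernel_weighted_ennreal_le:
  assumes "2 \<le> \<bar>\<xi>\<bar>" "\<eta> \<noteq> 0" "\<eta> \<noteq> \<xi>" "0 \<le> u" "0 \<le> v"
    and "0 \<le> s" "0 \<le> \<epsilon>" "0 \<le> \<sigma>" "1 + \<epsilon> \<le> 2 * \<sigma>"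
  shows "ennreal (japan \<xi> powr (s + \<epsilon>) * (T_kernel \<sigma> \<xi> \<eta> * u * v)) \<le> ennreal (2 powr (2 * s + \<epsilon>)) *
      (ennreal (near_zero_weight \<sigma> \<eta> * u) * ennreal (japan (\<xi> - \<eta>) powr s * v)
     + ennreal (japan \<eta> powr s * u) * ennreal (near_zero_weight \<sigma> (\<xi> - \<eta>) * v)
     + (ennreal (tail_weight (\<sigma> + s) \<eta>) + ennreal (tail_weight (\<sigma> + s) (\<xi> - \<eta>)))
       * ennreal (japan \<eta> powr s * u) * ennreal (japan (\<xi> - \<eta>) powr s * v))"
proof -
  define w g where "w = near_zero_weight \<sigma>" and "g = tail_weight (\<sigma> + s)"
  have "0 \<le> w x" "0 \<le> g x" for x
    by (simp_all add: w_def g_def near_zero_weight_nonneg tail_weight_nonneg)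
  have "japan \<xi> powr (s + \<epsilon>) * T_kernel \<sigma> \<xi> \<eta> * (u * v)
      \<le> 2 powr (2 * s + \<epsilon>) * (w \<eta> * japan (\<xi> - \<eta>) powr s + w (\<xi> - \<eta>) * japan \<eta> powr s
         + (g \<eta> + g (\<xi> - \<eta>)) * (japan \<eta> * japan (\<xi> - \<eta>)) powr s) * (u * v)"
    unfolding w_def g_def using assms by (intro mult_right_mono T_kernel_weighted_le) simp_all
  then have "ennreal (japan \<xi> powr (s + \<epsilon>) * (T_kernel \<sigma> \<xi> \<eta> * u * v))
      \<le> ennreal (2 powr (2 * s + \<epsilon>) * (w \<eta> * u * (japan (\<xi> - \<eta>) powr s * v)
         + japan \<eta> powr s * u * (w (\<xi> - \<eta>) * v)
         + (g \<eta> + g (\<xi> - \<eta>)) * (japan \<eta> powr s * u) * (japan (\<xi> - \<eta>) powr s * v)))"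
    by (intro ennreal_leI) (simp add: powr_mult algebra_simps)
  also have "\<dots> = ennreal (2 powr (2 * s + \<epsilon>)) *
      (ennreal (w \<eta> * u) * ennreal (japan (\<xi> - \<eta>) powr s * v)
     + ennreal (japan \<eta> powr s * u) * ennreal (w (\<xi> - \<eta>) * v)
     + (ennreal (g \<eta>) + ennreal (g (\<xi> - \<eta>))) * ennreal (japan \<eta> powr s * u) * ennreal (japan (\<xi> - \<eta>) powr s * v))"
    using \<open>0 \<le> u\<close> \<open>0 \<le> v\<close> \<open>\<And>x. 0 \<le> w x\<close> \<open>\<And>x. 0 \<le> g x\<close> by (simp add: ennreal_mult)
  finally show ?thesis
    unfolding w_def g_def .
qed

section \<open>Estimates for the bilinear operator\<close>

lemma sob_int_eq_square: "sob_int r f = (\<integral>\<^sup>+x. (ennreal (japan x powr r * cmod (f x)))\<^sup>2 \<partial>lborel)"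
  unfolding sob_int_def
proof (intro nn_integral_cong)
  fix x
  have "japan x powr (2 * r) = (japan x powr r)\<^sup>2"
    by (simp add: power2_eq_square flip: powr_add)
  then show "ennreal (japan x powr (2 * r) * (cmod (f x))\<^sup>2) = (ennreal (japan x powr r * cmod (f x)))\<^sup>2"
    by (simp add: ennreal_power power_mult_distrib)
qed

lemma sob_int_zero: "sob_int 0 f = (\<integral>\<^sup>+x. (ennreal (cmod (f x)))\<^sup>2 \<partial>lborel)"
  by (simp add: sob_int_eq_square)

lemma sob_int_mono:
  assumes "r \<le> r'"
  shows "sob_int r f \<le> sob_int r' f"
  unfolding sob_int_def
  using assms by (intro nn_integral_mono ennreal_leI mult_right_mono powr_mono) (auto simp: one_le_japan)

lemma T_sigma_measurable [measurable]:
  assumes [measurable]: "f1 \<in> borel_measurable borel" "f2 \<in> borel_measurable borel"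
  shows "T_sigma \<sigma> f1 f2 \<in> borel_measurable borel"
  unfolding T_sigma_def kdv_phase_def
  by (rule lborel.borel_measurable_lebesgue_integral) measurable

lemma norm_T_sigma_le:
  "ennreal (cmod (T_sigma \<sigma> f1 f2 \<xi>))
    \<le> (\<integral>\<^sup>+\<eta>. ennreal (T_kernel \<sigma> \<xi> \<eta> * cmod (f1 \<eta>) * cmod (f2 (\<xi> - \<eta>))) \<partial>lborel)"
proof -
  define g where "g \<eta> = complex_of_real (\<xi> / japan (kdv_phase \<xi> \<eta> (\<xi> - \<eta>)) powr \<sigma>) * f1 \<eta> * f2 (\<xi> - \<eta>)" for \<eta>
  have "norm (g \<eta>) = T_kernel \<sigma> \<xi> \<eta> * cmod (f1 \<eta>) * cmod (f2 (\<xi> - \<eta>))" for \<eta>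
    unfolding g_def norm_mult norm_of_real by (simp add: T_kernel_def)
  moreover have "ennreal (norm (integral\<^sup>L lborel g)) \<le> (\<integral>\<^sup>+\<eta>. norm (g \<eta>) \<partial>lborel)"
    by (cases "integrable lborel g") (simp_all add: integral_norm_bound_ennreal not_integrable_integral_eq)
  moreover have "T_sigma \<sigma> f1 f2 \<xi> = integral\<^sup>L lborel g"
    unfolding T_sigma_def g_def ..
  ultimately show ?thesis
    by simp
qed

lemma norm_T_sigma_square_le:
  assumes [measurable]: "f1 \<in> borel_measurable borel" "f2 \<in> borel_measurable borel" and "0 \<le> \<sigma>"
  shows "(ennreal (cmod (T_sigma \<sigma> f1 f2 \<xi>)))\<^sup>2 \<le> ennreal (\<xi>\<^sup>2) * (sob_int 0 f1 * sob_int 0 f2)"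
proof -
  have "ennreal (cmod (T_sigma \<sigma> f1 f2 \<xi>))
      \<le> (\<integral>\<^sup>+\<eta>. ennreal \<bar>\<xi>\<bar> * (ennreal (cmod (f1 \<eta>)) * ennreal (cmod (f2 (\<xi> - \<eta>)))) \<partial>lborel)"
    using norm_T_sigma_le
  proof (rule order_trans, intro nn_integral_mono)
    fix \<eta>
    show "ennreal (T_kernel \<sigma> \<xi> \<eta> * cmod (f1 \<eta>) * cmod (f2 (\<xi> - \<eta>)))
        \<le> ennreal \<bar>\<xi>\<bar> * (ennreal (cmod (f1 \<eta>)) * ennreal (cmod (f2 (\<xi> - \<eta>))))"
      using T_kernel_le_abs[OF \<open>0 \<le> \<sigma>\<close>]
      by (simp add: ennreal_mult'[symmetric] mult.assoc mult_right_mono ennreal_leI)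
  qed
  also have "\<dots> = ennreal \<bar>\<xi>\<bar> * (\<integral>\<^sup>+\<eta>. ennreal (cmod (f1 \<eta>)) * ennreal (cmod (f2 (\<xi> - \<eta>))) \<partial>lborel)"
    by (rule nn_integral_cmult) measurable
  finally have "(ennreal (cmod (T_sigma \<sigma> f1 f2 \<xi>)))\<^sup>2
      \<le> (ennreal \<bar>\<xi>\<bar>)\<^sup>2 * (\<integral>\<^sup>+\<eta>. ennreal (cmod (f1 \<eta>)) * ennreal (cmod (f2 (\<xi> - \<eta>))) \<partial>lborel)\<^sup>2"
    by (simp add: power_mono flip: power_mult_distrib)
  also have "\<dots> \<le> ennreal (\<xi>\<^sup>2) * (sob_int 0 f1 * sob_int 0 f2)"
    unfolding sob_int_zero ennreal_power[OF abs_ge_zero, of \<xi> 2, simplified]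
    by (intro mult_left_mono Cauchy_Schwarz_convolution) simp_all
  finally show ?thesis .
qed

lemma sob_int_T_sigma_low:
  assumes [measurable]: "f1 \<in> borel_measurable borel" "f2 \<in> borel_measurable borel"
    and "0 \<le> \<sigma>" "0 \<le> r"
  shows "(\<integral>\<^sup>+\<xi>\<in>{-2<..<2}. (ennreal (japan \<xi> powr r * cmod (T_sigma \<sigma> f1 f2 \<xi>)))\<^sup>2 \<partial>lborel)
      \<le> ennreal (4 * (2 * 3 powr r)\<^sup>2) * (sob_int 0 f1 * sob_int 0 f2)"
proof -
  define S where "S = sob_int 0 f1 * sob_int 0 f2"
  have "(ennreal (japan \<xi> powr r * cmod (T_sigma \<sigma> f1 f2 \<xi>)))\<^sup>2 \<le> ennreal ((2 * 3 powr r)\<^sup>2) * S"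
    if "\<xi> \<in> {-2<..<2}" for \<xi>
  proof -
    have "japan \<xi> powr r * \<bar>\<xi>\<bar> \<le> 3 powr r * 2"
      using that japan_le_one_plus_abs[of \<xi>] \<open>0 \<le> r\<close>
      by (intro mult_mono powr_mono2) auto
    then have "(japan \<xi> powr r * \<bar>\<xi>\<bar>)\<^sup>2 \<le> (2 * 3 powr r)\<^sup>2"
      by (intro power_mono) (simp_all add: mult.commute)
    have "(ennreal (japan \<xi> powr r * cmod (T_sigma \<sigma> f1 f2 \<xi>)))\<^sup>2
        = ennreal ((japan \<xi> powr r)\<^sup>2) * (ennreal (cmod (T_sigma \<sigma> f1 f2 \<xi>)))\<^sup>2"
      by (simp add: ennreal_mult power_mult_distrib ennreal_power)
    also have "\<dots> \<le> ennreal ((japan \<xi> powr r)\<^sup>2) * (ennreal (\<xi>\<^sup>2) * S)"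
      unfolding S_def using \<open>0 \<le> \<sigma>\<close> by (intro mult_left_mono norm_T_sigma_square_le) simp_all
    also have "\<dots> = ennreal ((japan \<xi> powr r * \<bar>\<xi>\<bar>)\<^sup>2) * S"
      by (simp add: ennreal_mult power_mult_distrib mult.assoc)
    also have "\<dots> \<le> ennreal ((2 * 3 powr r)\<^sup>2) * S"
      using \<open>(japan \<xi> powr r * \<bar>\<xi>\<bar>)\<^sup>2 \<le> _\<close> by (intro mult_right_mono ennreal_leI) simp_all
    finally show ?thesis .
  qed
  then have "(\<integral>\<^sup>+\<xi>\<in>{-2<..<2}. (ennreal (japan \<xi> powr r * cmod (T_sigma \<sigma> f1 f2 \<xi>)))\<^sup>2 \<partial>lborel)
      \<le> (\<integral>\<^sup>+\<xi>\<in>{-2<..<2::real}. ennreal ((2 * 3 powr r)\<^sup>2) * S \<partial>lborel)"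
    by (intro nn_integral_mono) (simp split: split_indicator)
  also have "\<dots> = ennreal ((2 * 3 powr r)\<^sup>2) * S * 4"
    by (subst nn_integral_cmult_indicator) auto
  also have "\<dots> = ennreal (4 * (2 * 3 powr r)\<^sup>2) * S"
    using ennreal_mult[of 4 "(2 * 3 powr r)\<^sup>2"] by (simp add: mult_ac)
  finally show ?thesis
    unfolding S_def .
qed

lemma T_sigma_high_pointwise:
  assumes [measurable]: "f1 \<in> borel_measurable borel" "f2 \<in> borel_measurable borel"
    and "2 \<le> \<bar>\<xi>\<bar>" "0 \<le> s" "0 \<le> \<epsilon>" "0 \<le> \<sigma>" "1 + \<epsilon> \<le> 2 * \<sigma>"
  shows "ennreal (japan \<xi> powr (s + \<epsilon>) * cmod (T_sigma \<sigma> f1 f2 \<xi>)) \<le> ennreal (2 powr (2 * s + \<epsilon>)) *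
      ((\<integral>\<^sup>+\<eta>. ennreal (near_zero_weight \<sigma> \<eta> * cmod (f1 \<eta>))
               * ennreal (japan (\<xi> - \<eta>) powr s * cmod (f2 (\<xi> - \<eta>))) \<partial>lborel)
     + (\<integral>\<^sup>+\<eta>. ennreal (japan \<eta> powr s * cmod (f1 \<eta>))
               * ennreal (near_zero_weight \<sigma> (\<xi> - \<eta>) * cmod (f2 (\<xi> - \<eta>))) \<partial>lborel)
     + (\<integral>\<^sup>+\<eta>. (ennreal (tail_weight (\<sigma> + s) \<eta>) + ennreal (tail_weight (\<sigma> + s) (\<xi> - \<eta>)))
               * ennreal (japan \<eta> powr s * cmod (f1 \<eta>))
               * ennreal (japan (\<xi> - \<eta>) powr s * cmod (f2 (\<xi> - \<eta>))) \<partial>lborel))"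
    (is "_ \<le> ennreal ?c * (?X + ?Y + ?Z)")
proof -
  have ae: "AE \<eta> in lborel. \<eta> \<noteq> 0 \<and> \<eta> \<noteq> \<xi>"
    using AE_lborel_singleton[of 0] AE_lborel_singleton[of \<xi>] by eventually_elim simp
  have "ennreal (japan \<xi> powr (s + \<epsilon>) * cmod (T_sigma \<sigma> f1 f2 \<xi>))
      \<le> ennreal (japan \<xi> powr (s + \<epsilon>))
        * (\<integral>\<^sup>+\<eta>. ennreal (T_kernel \<sigma> \<xi> \<eta> * cmod (f1 \<eta>) * cmod (f2 (\<xi> - \<eta>))) \<partial>lborel)"
    by (simp add: ennreal_mult mult_left_mono norm_T_sigma_le)
  also have "\<dots> = (\<integral>\<^sup>+\<eta>. ennreal (japan \<xi> powr (s + \<epsilon>)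
        * (T_kernel \<sigma> \<xi> \<eta> * cmod (f1 \<eta>) * cmod (f2 (\<xi> - \<eta>)))) \<partial>lborel)"
    by (simp add: ennreal_mult T_kernel_nonneg nn_integral_cmult[symmetric])
  also have "\<dots> \<le> (\<integral>\<^sup>+\<eta>. ennreal ?c * (ennreal (near_zero_weight \<sigma> \<eta> * cmod (f1 \<eta>))
               * ennreal (japan (\<xi> - \<eta>) powr s * cmod (f2 (\<xi> - \<eta>)))
     + ennreal (japan \<eta> powr s * cmod (f1 \<eta>)) * ennreal (near_zero_weight \<sigma> (\<xi> - \<eta>) * cmod (f2 (\<xi> - \<eta>)))
     + (ennreal (tail_weight (\<sigma> + s) \<eta>) + ennreal (tail_weight (\<sigma> + s) (\<xi> - \<eta>)))
               * ennreal (japan \<eta> powr s * cmod (f1 \<eta>))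
               * ennreal (japan (\<xi> - \<eta>) powr s * cmod (f2 (\<xi> - \<eta>)))) \<partial>lborel)"
    by (rule nn_integral_mono_AE, rule AE_mp[OF ae AE_I2])
      (use assms in \<open>auto intro!: T_kernel_weighted_ennreal_le\<close>)
  also have "\<dots> = ennreal ?c * (?X + ?Y + ?Z)"
    by (simp add: nn_integral_cmult nn_integral_add)
  finally show ?thesis .
qed

lemma sob_int_T_sigma_high:
  assumes [measurable]: "f1 \<in> borel_measurable borel" "f2 \<in> borel_measurable borel"
    and "0 \<le> s" "0 \<le> \<epsilon>" "0 \<le> \<sigma>" "1 + \<epsilon> \<le> 2 * \<sigma>"
  shows "(\<integral>\<^sup>+\<xi>\<in>{\<xi>. 2 \<le> \<bar>\<xi>\<bar>}. (ennreal (japan \<xi> powr (s + \<epsilon>) * cmod (T_sigma \<sigma> f1 f2 \<xi>)))\<^sup>2 \<partial>lborel)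
    \<le> ennreal ((2 powr (2 * s + \<epsilon>))\<^sup>2) *
      (4 * ((\<integral>\<^sup>+x. ennreal (near_zero_weight \<sigma> x * cmod (f1 x)) \<partial>lborel)\<^sup>2 * sob_int s f2
      + (\<integral>\<^sup>+x. ennreal (near_zero_weight \<sigma> x * cmod (f2 x)) \<partial>lborel)\<^sup>2 * sob_int s f1
      + 4 * (\<integral>\<^sup>+x. (ennreal (tail_weight (\<sigma> + s) x))\<^sup>2 \<partial>lborel) * (sob_int s f1 * sob_int s f2)))"
proof -
  define c where "c = 2 powr (2 * s + \<epsilon>)"
  define a1 a2 where "a1 \<eta> = ennreal (japan \<eta> powr s * cmod (f1 \<eta>))"
    and "a2 \<eta> = ennreal (japan \<eta> powr s * cmod (f2 \<eta>))" for \<eta>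
  define b1 b2 where "b1 \<eta> = ennreal (near_zero_weight \<sigma> \<eta> * cmod (f1 \<eta>))"
    and "b2 \<eta> = ennreal (near_zero_weight \<sigma> \<eta> * cmod (f2 \<eta>))" for \<eta>
  define g where "g \<eta> = ennreal (tail_weight (\<sigma> + s) \<eta>)" for \<eta>
  have [measurable]: "a1 \<in> borel_measurable borel" "a2 \<in> borel_measurable borel"
    "b1 \<in> borel_measurable borel" "b2 \<in> borel_measurable borel" "g \<in> borel_measurable borel"
    unfolding a1_def a2_def b1_def b2_def g_def by measurable
  have "(\<integral>\<^sup>+\<xi>\<in>{\<xi>. 2 \<le> \<bar>\<xi>\<bar>}. (ennreal (japan \<xi> powr (s + \<epsilon>) * cmod (T_sigma \<sigma> f1 f2 \<xi>)))\<^sup>2 \<partial>lborel)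
      \<le> (\<integral>\<^sup>+\<xi>. (ennreal c * ((\<integral>\<^sup>+\<eta>. b1 \<eta> * a2 (\<xi> - \<eta>) \<partial>lborel) + (\<integral>\<^sup>+\<eta>. a1 \<eta> * b2 (\<xi> - \<eta>) \<partial>lborel)
           + (\<integral>\<^sup>+\<eta>. (g \<eta> + g (\<xi> - \<eta>)) * a1 \<eta> * a2 (\<xi> - \<eta>) \<partial>lborel)))\<^sup>2 \<partial>lborel)"
    unfolding c_def a1_def a2_def b1_def b2_def g_def using assms
    by (intro nn_integral_mono) (auto split: split_indicator intro!: power_mono T_sigma_high_pointwise)
  also have "\<dots> = ennreal (c\<^sup>2) * (\<integral>\<^sup>+\<xi>. ((\<integral>\<^sup>+\<eta>. b1 \<eta> * a2 (\<xi> - \<eta>) \<partial>lborel) + (\<integral>\<^sup>+\<eta>. a1 \<eta> * b2 (\<xi> - \<eta>) \<partial>lborel)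
           + (\<integral>\<^sup>+\<eta>. (g \<eta> + g (\<xi> - \<eta>)) * a1 \<eta> * a2 (\<xi> - \<eta>) \<partial>lborel))\<^sup>2 \<partial>lborel)"
    by (simp add: power_mult_distrib ennreal_power c_def nn_integral_cmult)
  also have "\<dots> \<le> ennreal (c\<^sup>2) * (4 * ((\<integral>\<^sup>+x. b1 x \<partial>lborel)\<^sup>2 * sob_int s f2
      + (\<integral>\<^sup>+x. b2 x \<partial>lborel)\<^sup>2 * sob_int s f1 + 4 * (\<integral>\<^sup>+x. (g x)\<^sup>2 \<partial>lborel) * (sob_int s f1 * sob_int s f2)))"
    unfolding sob_int_eq_square a1_def[symmetric] a2_def[symmetric]
    by (intro mult_left_mono three_convolutions_L2_le) simp_all
  finally show ?thesis
    unfolding c_def b1_def b2_def g_def .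
qed

lemma sob_int_T_sigma_bound:
  assumes [measurable]: "f1 \<in> borel_measurable borel" "f2 \<in> borel_measurable borel"
    and "0 \<le> s" "0 \<le> \<epsilon>" "0 \<le> \<sigma>" "1 + \<epsilon> \<le> 2 * \<sigma>"
    and S1: "sob_int s f1 \<le> ennreal (N1\<^sup>2)" and S2: "sob_int s f2 \<le> ennreal (N2\<^sup>2)"
    and W1: "(\<integral>\<^sup>+x. ennreal (near_zero_weight \<sigma> x * cmod (f1 x)) \<partial>lborel) \<le> ennreal (H * N1)"
    and W2: "(\<integral>\<^sup>+x. ennreal (near_zero_weight \<sigma> x * cmod (f2 x)) \<partial>lborel) \<le> ennreal (H * N2)"
    and E: "(\<integral>\<^sup>+x. (ennreal (tail_weight (\<sigma> + s) x))\<^sup>2 \<partial>lborel) \<le> ennreal E"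
    and nonneg: "0 \<le> N1" "0 \<le> N2" "0 \<le> H" "0 \<le> E"
  shows "sob_int (s + \<epsilon>) (T_sigma \<sigma> f1 f2)
    \<le> ennreal ((4 * (2 * 3 powr (s + \<epsilon>))\<^sup>2 + 4 * (2 powr (2 * s + \<epsilon>))\<^sup>2 * (2 * H\<^sup>2 + 4 * E)) * (N1 * N2)\<^sup>2)"
proof -
  define c where "c = 2 powr (2 * s + \<epsilon>)"
  define F where "F \<xi> = (ennreal (japan \<xi> powr (s + \<epsilon>) * cmod (T_sigma \<sigma> f1 f2 \<xi>)))\<^sup>2" for \<xi>
  have [measurable]: "F \<in> borel_measurable borel"
    unfolding F_def by measurable
  have "sob_int 0 f1 \<le> ennreal (N1\<^sup>2)" "sob_int 0 f2 \<le> ennreal (N2\<^sup>2)"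
    using S1 S2 sob_int_mono[OF \<open>0 \<le> s\<close>] order_trans by blast+
  have "(\<integral>\<^sup>+\<xi>\<in>{-2<..<2}. F \<xi> \<partial>lborel) \<le> ennreal (4 * (2 * 3 powr (s + \<epsilon>))\<^sup>2) * (sob_int 0 f1 * sob_int 0 f2)"
    unfolding F_def using assms by (intro sob_int_T_sigma_low) simp_all
  also have "\<dots> \<le> ennreal (4 * (2 * 3 powr (s + \<epsilon>))\<^sup>2) * (ennreal (N1\<^sup>2) * ennreal (N2\<^sup>2))"
    using \<open>sob_int 0 f1 \<le> _\<close> \<open>sob_int 0 f2 \<le> _\<close> by (intro mult_left_mono mult_mono) simp_all
  finally have low: "(\<integral>\<^sup>+\<xi>\<in>{-2<..<2}. F \<xi> \<partial>lborel) \<le> ennreal (4 * (2 * 3 powr (s + \<epsilon>))\<^sup>2 * (N1\<^sup>2 * N2\<^sup>2))"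
    by (simp add: ennreal_mult)
  have "(\<integral>\<^sup>+\<xi>\<in>{\<xi>. 2 \<le> \<bar>\<xi>\<bar>}. F \<xi> \<partial>lborel) \<le> ennreal (c\<^sup>2) *
       (4 * ((\<integral>\<^sup>+x. ennreal (near_zero_weight \<sigma> x * cmod (f1 x)) \<partial>lborel)\<^sup>2 * sob_int s f2
      + (\<integral>\<^sup>+x. ennreal (near_zero_weight \<sigma> x * cmod (f2 x)) \<partial>lborel)\<^sup>2 * sob_int s f1
      + 4 * (\<integral>\<^sup>+x. (ennreal (tail_weight (\<sigma> + s) x))\<^sup>2 \<partial>lborel) * (sob_int s f1 * sob_int s f2)))"
    unfolding F_def c_def using assms by (intro sob_int_T_sigma_high) simp_all
  also have "\<dots> \<le> ennreal (c\<^sup>2 * (4 * ((H * N1)\<^sup>2 * N2\<^sup>2 + (H * N2)\<^sup>2 * N1\<^sup>2 + 4 * E * (N1\<^sup>2 * N2\<^sup>2))))"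
    using S1 S2 W1 W2 E nonneg
    by (intro ennreal_le_mult ennreal_le_add ennreal_le_power2 order_refl) simp_all
  finally have high: "(\<integral>\<^sup>+\<xi>\<in>{\<xi>. 2 \<le> \<bar>\<xi>\<bar>}. F \<xi> \<partial>lborel)
      \<le> ennreal (c\<^sup>2 * (4 * ((H * N1)\<^sup>2 * N2\<^sup>2 + (H * N2)\<^sup>2 * N1\<^sup>2 + 4 * E * (N1\<^sup>2 * N2\<^sup>2))))" .
  have "sob_int (s + \<epsilon>) (T_sigma \<sigma> f1 f2) = (\<integral>\<^sup>+\<xi>. F \<xi> * indicator {-2<..<2} \<xi> + F \<xi> * indicator {\<xi>. 2 \<le> \<bar>\<xi>\<bar>} \<xi> \<partial>lborel)"
    unfolding sob_int_eq_square F_def by (intro nn_integral_cong) (auto split: split_indicator)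
  also have "\<dots> = (\<integral>\<^sup>+\<xi>\<in>{-2<..<2}. F \<xi> \<partial>lborel) + (\<integral>\<^sup>+\<xi>\<in>{\<xi>. 2 \<le> \<bar>\<xi>\<bar>}. F \<xi> \<partial>lborel)"
    by (rule nn_integral_add) measurable
  also have "\<dots> \<le> ennreal (4 * (2 * 3 powr (s + \<epsilon>))\<^sup>2 * (N1\<^sup>2 * N2\<^sup>2))
      + ennreal (c\<^sup>2 * (4 * ((H * N1)\<^sup>2 * N2\<^sup>2 + (H * N2)\<^sup>2 * N1\<^sup>2 + 4 * E * (N1\<^sup>2 * N2\<^sup>2))))"
    using low high by (rule add_mono)
  also have "\<dots> = ennreal ((4 * (2 * 3 powr (s + \<epsilon>))\<^sup>2 + 4 * c\<^sup>2 * (2 * H\<^sup>2 + 4 * E)) * (N1 * N2)\<^sup>2)"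
    using nonneg by (subst ennreal_plus[symmetric]) (simp_all add: algebra_simps)
  finally show ?thesis
    unfolding c_def .
qed

lemma loc_int_T_sigma_le:
  assumes [measurable]: "f1 \<in> borel_measurable borel" "f2 \<in> borel_measurable borel"
    and "0 \<le> \<sigma>" "0 < lam"
    and "sob_int 0 f1 \<le> ennreal (N1\<^sup>2)" "sob_int 0 f2 \<le> ennreal (N2\<^sup>2)" "0 \<le> N1" "0 \<le> N2"
  shows "loc_int lam (T_sigma \<sigma> f1 f2) \<le> ennreal ((2 powr (1 / lam) * (N1 * N2)) powr lam)"
proof -
  have "cmod (T_sigma \<sigma> f1 f2 \<xi>) powr lam \<le> (N1 * N2) powr lam" if "\<xi> \<in> {-1<..<1}" for \<xi>
  proof -
    have "\<xi>\<^sup>2 \<le> 1"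
      using that abs_square_le_1[of \<xi>] by auto
    have "ennreal ((cmod (T_sigma \<sigma> f1 f2 \<xi>))\<^sup>2) \<le> ennreal (\<xi>\<^sup>2) * (sob_int 0 f1 * sob_int 0 f2)"
      using norm_T_sigma_square_le[of f1 f2 \<sigma> \<xi>] assms by (simp add: ennreal_power)
    also have "\<dots> \<le> ennreal (1 * (N1\<^sup>2 * N2\<^sup>2))"
      using assms \<open>\<xi>\<^sup>2 \<le> 1\<close> by (intro ennreal_le_mult) simp_all
    finally have "(cmod (T_sigma \<sigma> f1 f2 \<xi>))\<^sup>2 \<le> (N1 * N2)\<^sup>2"
      by (simp add: power_mult_distrib)
    then show ?thesis
      using assms by (intro powr_mono2) (auto intro: power2_le_imp_le)
  qed
  then have "loc_int lam (T_sigma \<sigma> f1 f2) \<le> (\<integral>\<^sup>+\<xi>\<in>{-1<..<1::real}. ennreal ((N1 * N2) powr lam) \<partial>lborel)"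
    unfolding loc_int_def by (intro nn_integral_mono) (simp split: split_indicator)
  also have "\<dots> = ennreal (2 * (N1 * N2) powr lam)"
    by (subst nn_integral_cmult_indicator) (simp_all add: ennreal_mult mult.commute)
  also have "2 * (N1 * N2) powr lam = (2 powr (1 / lam) * (N1 * N2)) powr lam"
    using assms by (simp add: powr_mult powr_powr)
  finally show ?thesis .
qed

section \<open>The norm of the auxiliary space\<close>

lemma in_Hcal_measurable: "in_Hcal lam r f \<Longrightarrow> f \<in> borel_measurable borel"
  by (simp add: in_Hcal_def)

lemma Hcal_norm_nonneg: "0 \<le> Hcal_norm lam r f"
  by (simp add: Hcal_norm_def)

lemma Hcal_norm_bounds:
  assumes "in_Hcal lam r f" "0 < lam"
  shows "sob_int r f \<le> ennreal ((Hcal_norm lam r f)\<^sup>2)"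
    and "loc_int lam f \<le> ennreal (Hcal_norm lam r f powr lam)"
proof -
  define S L where "S = enn2real (sob_int r f)" and "L = enn2real (loc_int lam f)"
  have "sob_int r f = ennreal S" "loc_int lam f = ennreal L" "0 \<le> S" "0 \<le> L"
    using assms(1) by (auto simp: in_Hcal_def S_def L_def less_top)
  moreover have "sqrt S \<le> Hcal_norm lam r f" "L powr (1 / lam) \<le> Hcal_norm lam r f"
    by (simp_all add: Hcal_norm_def S_def L_def)
  ultimately show "sob_int r f \<le> ennreal ((Hcal_norm lam r f)\<^sup>2)"
    "loc_int lam f \<le> ennreal (Hcal_norm lam r f powr lam)"
    using assms(2) powr_mono2[of lam "L powr (1 / lam)" "Hcal_norm lam r f"]
    by (auto simp: powr_powr intro!: ennreal_leI sqrt_le_D)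
qed

lemma in_Hcal_Hcal_norm_le:
  assumes "f \<in> borel_measurable lborel" "0 < lam" "0 \<le> A" "0 \<le> B"
    and "sob_int r f \<le> ennreal (A\<^sup>2)" "loc_int lam f \<le> ennreal (B powr lam)"
  shows "in_Hcal lam r f" "Hcal_norm lam r f \<le> A + B"
proof -
  show "in_Hcal lam r f"
    using assms by (auto simp: in_Hcal_def intro: le_less_trans)
  have "enn2real (sob_int r f) \<le> A\<^sup>2" "enn2real (loc_int lam f) \<le> B powr lam"
    using assms by (simp_all add: enn2real_leI)
  moreover have "(B powr lam) powr (1 / lam) = B"
    using assms by (simp add: powr_powr)
  ultimately have "sqrt (enn2real (sob_int r f)) \<le> A" "enn2real (loc_int lam f) powr (1 / lam) \<le> B"
    using assms by (auto intro: real_le_lsqrt powr_mono2[of "1 / lam", THEN order_trans])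
  then show "Hcal_norm lam r f \<le> A + B"
    by (simp add: Hcal_norm_def)
qed

lemma near_zero_weight_integral_le:
  assumes "in_Hcal lam r f" "1 < lam" "1 < q" "1 / lam + 1 / q = 1" "0 \<le> \<sigma>" "\<sigma> * q < 1"
  shows "(\<integral>\<^sup>+x. ennreal (near_zero_weight \<sigma> x * cmod (f x)) \<partial>lborel)
    \<le> ennreal ((2 / (1 - \<sigma> * q)) powr (1 / q) * Hcal_norm lam r f)"
proof -
  define F where "F x = indicator {-1<..<1} x * cmod (f x)" for x :: real
  have [measurable]: "f \<in> borel_measurable borel"
    using assms(1) by (simp add: in_Hcal_def)
  have "(\<integral>\<^sup>+x. ennreal (F x powr lam) \<partial>lborel) = loc_int lam f"
    unfolding loc_int_def F_def using assms(2)
    by (intro nn_integral_cong) (simp split: split_indicator)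
  also have "\<dots> \<le> ennreal (Hcal_norm lam r f powr lam)"
    using assms(1,2) by (simp add: Hcal_norm_bounds)
  finally have F_bound: "(\<integral>\<^sup>+x. ennreal (F x powr lam) \<partial>lborel) \<le> ennreal (Hcal_norm lam r f powr lam)" .
  have "(\<integral>\<^sup>+x. ennreal (near_zero_weight \<sigma> x powr q) \<partial>lborel)
      = (\<integral>\<^sup>+x\<in>{-1<..<1}. ennreal (\<bar>x\<bar> powr - (\<sigma> * q)) \<partial>lborel)"
    unfolding near_zero_weight_def using assms(3)
    by (intro nn_integral_cong) (simp add: powr_powr split: split_indicator)
  also have "\<dots> \<le> ennreal (2 / (1 - \<sigma> * q))"
    using assms by (intro nn_integral_abs_powr_near_0) simp_all
  finally have "(\<integral>\<^sup>+x. ennreal (F x * near_zero_weight \<sigma> x) \<partial>lborel)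
      \<le> ennreal ((Hcal_norm lam r f powr lam) powr (1 / lam) * (2 / (1 - \<sigma> * q)) powr (1 / q))"
    using assms F_bound
    by (intro holder_inequality) (simp_all add: F_def near_zero_weight_nonneg Hcal_norm_def)
  moreover have "F x * near_zero_weight \<sigma> x = near_zero_weight \<sigma> x * cmod (f x)" for x
    by (simp add: F_def near_zero_weight_def split: split_indicator)
  ultimately show ?thesis
    using assms(2) by (simp add: powr_powr Hcal_norm_def mult.commute)
qed

lemma loc_int_T_sigma_Hcal_bound:
  assumes "in_Hcal lam s f1" "in_Hcal lam s f2" "0 \<le> s" "0 \<le> \<sigma>" "0 < lam"
  shows "loc_int lam (T_sigma \<sigma> f1 f2)
    \<le> ennreal ((2 powr (1 / lam) * (Hcal_norm lam s f1 * Hcal_norm lam s f2)) powr lam)"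
proof (rule loc_int_T_sigma_le)
  show "sob_int 0 f1 \<le> ennreal ((Hcal_norm lam s f1)\<^sup>2)" "sob_int 0 f2 \<le> ennreal ((Hcal_norm lam s f2)\<^sup>2)"
    using assms sob_int_mono[of 0 s] Hcal_norm_bounds(1) order_trans by metis+
qed (use assms in \<open>simp_all add: in_Hcal_measurable Hcal_norm_nonneg\<close>)

lemma kdv_exponent_conditions:
  fixes \<rho> lam \<sigma> \<epsilon> :: real
  assumes "\<rho> > 1" "lam > 1" "1 - \<sigma> = 1 / \<rho> + 1 / lam" "\<rho> * (2 * \<sigma> - 1 - \<epsilon>) > 1"
  shows "1 + \<epsilon> \<le> 2 * \<sigma>" "\<sigma> * (lam / (lam - 1)) < 1"
proof -
  have "0 < 2 * \<sigma> - 1 - \<epsilon>"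
    using assms(1,4) zero_less_mult_pos[of \<rho> "2 * \<sigma> - 1 - \<epsilon>"] by simp
  then show "1 + \<epsilon> \<le> 2 * \<sigma>"
    by simp
  have "0 < 1 / \<rho>"
    using assms(1) by simp
  then have "\<sigma> < 1 - 1 / lam"
    using assms(3) by linarith
  then show "\<sigma> * (lam / (lam - 1)) < 1"
    using assms(2) by (simp add: field_simps)
qed

lemma sob_int_T_sigma_Hcal_bound:
  assumes "0 \<le> s" "0 \<le> \<epsilon>" "1 / 2 < \<sigma>" "1 + \<epsilon> \<le> 2 * \<sigma>"
    and "1 < lam" "1 < q" "1 / lam + 1 / q = 1" "\<sigma> * q < 1"
  obtains K where "0 \<le> K" "\<And>f1 f2. in_Hcal lam s f1 \<Longrightarrow> in_Hcal lam s f2 \<Longrightarrow>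
    sob_int (s + \<epsilon>) (T_sigma \<sigma> f1 f2) \<le> ennreal ((K * (Hcal_norm lam s f1 * Hcal_norm lam s f2))\<^sup>2)"
proof
  define H where "H = (2 / (1 - \<sigma> * q)) powr (1 / q)"
  define E where "E = 2 / (2 * (\<sigma> + s) - 1)"
  define K where "K = 4 * (2 * 3 powr (s + \<epsilon>))\<^sup>2 + 4 * (2 powr (2 * s + \<epsilon>))\<^sup>2 * (2 * H\<^sup>2 + 4 * E)"
  have "0 \<le> E" "0 \<le> K"
    using assms(1,3) by (simp_all add: E_def K_def H_def)
  then show "0 \<le> sqrt K"
    by simp
  have E_bound: "(\<integral>\<^sup>+x. (ennreal (tail_weight (\<sigma> + s) x))\<^sup>2 \<partial>lborel) \<le> ennreal E"
    unfolding E_def using assms(1,3) by (intro tail_weight_square_integral_le) simp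
  have W: "(\<integral>\<^sup>+x. ennreal (near_zero_weight \<sigma> x * cmod (f x)) \<partial>lborel) \<le> ennreal (H * Hcal_norm lam s f)"
    if "in_Hcal lam s f" for f
    unfolding H_def using that assms by (intro near_zero_weight_integral_le) simp_all
  fix f1 f2 assume f: "in_Hcal lam s f1" "in_Hcal lam s f2"
  then have "sob_int (s + \<epsilon>) (T_sigma \<sigma> f1 f2) \<le> ennreal (K * (Hcal_norm lam s f1 * Hcal_norm lam s f2)\<^sup>2)"
    unfolding K_def using assms E_bound W \<open>0 \<le> E\<close> Hcal_norm_bounds(1)[of lam s]
    by (intro sob_int_T_sigma_bound) (simp_all add: in_Hcal_measurable Hcal_norm_nonneg H_def)
  then show "sob_int (s + \<epsilon>) (T_sigma \<sigma> f1 f2) \<le> ennreal ((sqrt K * (Hcal_norm lam s f1 * Hcal_norm lam s f2))\<^sup>2)"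
    using \<open>0 \<le> K\<close> by (simp add: power_mult_distrib)
qed

theorem lemma9:
  fixes s \<epsilon> \<rho> lam \<sigma> :: real
  assumes "s > 0" and "0 < \<epsilon>" and "\<epsilon> < min s 1"
    and "\<rho> > 1" and "lam > 1" and "1/2 < \<sigma>" and "\<sigma> < 1"
    and "1 - \<sigma> = 1 / \<rho> + 1 / lam"
    and "\<rho> * (2 * \<sigma> - 1 - \<epsilon>) > 1"
    and "s < 1 \<Longrightarrow> lam \<le> 2 / (1 - s)"
  shows "\<exists>C. \<forall>f1 f2. in_Hcal lam s f1 \<longrightarrow> in_Hcal lam s f2 \<longrightarrow>
           in_Hcal lam (s + \<epsilon>) (T_sigma \<sigma> f1 f2) \<and>
           Hcal_norm lam (s + \<epsilon>) (T_sigma \<sigma> f1 f2) \<le> C * Hcal_norm lam s f1 * Hcal_norm lam s f2"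
proof -
  define q where "q = lam / (lam - 1)"
  have exps: "1 + \<epsilon> \<le> 2 * \<sigma>" "\<sigma> * q < 1"
    unfolding q_def using kdv_exponent_conditions assms(4,5,8,9) by blast+
  have q: "1 < q" "1 / lam + 1 / q = 1"
    using assms(5) by (simp_all add: q_def field_simps)
  obtain K where "0 \<le> K" and sob: "\<And>f1 f2. in_Hcal lam s f1 \<Longrightarrow> in_Hcal lam s f2 \<Longrightarrow>
      sob_int (s + \<epsilon>) (T_sigma \<sigma> f1 f2) \<le> ennreal ((K * (Hcal_norm lam s f1 * Hcal_norm lam s f2))\<^sup>2)"
    using sob_int_T_sigma_Hcal_bound[of s \<epsilon> \<sigma> lam q] assms(1,2,5,6) exps q by auto
  show ?thesis
  proof (intro exI allI impI)
    fix f1 f2 assume f: "in_Hcal lam s f1" "in_Hcal lam s f2"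
    define N1 N2 where "N1 = Hcal_norm lam s f1" and "N2 = Hcal_norm lam s f2"
    have loc: "loc_int lam (T_sigma \<sigma> f1 f2) \<le> ennreal ((2 powr (1 / lam) * (N1 * N2)) powr lam)"
      unfolding N1_def N2_def using f assms(1,5,6) by (intro loc_int_T_sigma_Hcal_bound) simp_all
    have "in_Hcal lam (s + \<epsilon>) (T_sigma \<sigma> f1 f2)"
      "Hcal_norm lam (s + \<epsilon>) (T_sigma \<sigma> f1 f2) \<le> K * (N1 * N2) + 2 powr (1 / lam) * (N1 * N2)"
      using in_Hcal_Hcal_norm_le[OF _ _ _ _ sob[OF f, folded N1_def N2_def] loc] f assms(5) \<open>0 \<le> K\<close>
      by (simp_all add: N1_def N2_def Hcal_norm_nonneg T_sigma_measurable in_Hcal_measurable)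
    then show "in_Hcal lam (s + \<epsilon>) (T_sigma \<sigma> f1 f2) \<and>
        Hcal_norm lam (s + \<epsilon>) (T_sigma \<sigma> f1 f2) \<le> (K + 2 powr (1 / lam)) * N1 * N2"
      by (simp add: algebra_simps)
  qed
qed

end
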